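(* Let $N\ge2$, $j,\ell\ge0$, and let $u\in\mathbb C^N$ be a unit vector; let $n_u=a^*(u)a(u)$ be the number operator of $u$ on $\mathcal H_{j+\ell}$. Then, with $\mathcal T^\ell$ acting on operators on $\mathcal H_j$, $$\mathcal T^\ell\big(|\otimes^j u\rangle\langle\otimes^j u|\big)=\frac{1}{j!}f_\ell(n_u),\qquad f_\ell(m)=\begin{cases}\frac{\ell!\,m!}{(m-j)!},& m\ge j,\\ 0,& m<j,\end{cases}$$ so $f_\ell$ is non-decreasing. In particular, for $M\ge1$, $k\ge0$ and a unit vector $v$, the nonzero eigenvalues of $\mathcal T^k(|\otimes^M v\rangle\langle\otimes^M v|)$ on $\mathcal H_{M+k}$ are $\frac{k!\,m!}{M!\,(m-M)!}$, $m=M,\dots,M+k$, the eigenvalue indexed by $m$ having multiplicity $\binom{M+k-m+N-2}{N-2}$.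
   Context: $\mathcal H_n=P_n(\mathbb C^N)^{\otimes n}$ is the totally symmetric subspace, $P_n$ the symmetrizing projection. For an operator $\Gamma$ on $\mathcal H_j$, $\mathcal T^\ell(\Gamma)=\frac{(j+\ell)!}{j!}P_{j+\ell}(I_{\mathbb C^N}^{\otimes\ell}\otimes\Gamma)P_{j+\ell}$. On the bosonic Fock space $\bigoplus_n\mathcal H_n$, $a^*(u)\phi=\sqrt{n+1}P_{n+1}(u\otimes\phi)$ for $\phi\in\mathcal H_n$ and $a(u)=a^*(u)^*$; $n_u=a^*(u)a(u)$ has eigenvalue $m$ on symmetrized tensors containing exactly $m$ factors $u$ and the remaining factors orthogonal to $u$. *)

theory Defs
  imports "HOL-Analysis.Analysis" "HOL-Combinatorics.Permutations"
    "HOL-Computational_Algebra.Polynomial" "HOL-Library.Function_Algebras"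
begin

text \<open>Order-n tensors over C^N are functions on multi-indices (lists of length n with
entries below N); operators are matrices indexed by such multi-indices.  Entries
outside the index sets are irrelevant (all sums range over the index sets).\<close>

type_synonym tensor = "nat list \<Rightarrow> complex"
type_synonym mop = "nat list \<Rightarrow> nat list \<Rightarrow> complex"

definition idx :: "nat \<Rightarrow> nat \<Rightarrow> nat list set" where
  "idx N n = {xs. length xs = n \<and> set xs \<subseteq> {..<N}}"

definition app :: "nat \<Rightarrow> nat \<Rightarrow> mop \<Rightarrow> tensor \<Rightarrow> tensor" where
  "app N n A \<psi> = (\<lambda>a. \<Sum>b\<in>idx N n. A a b * \<psi> b)"

definition mmul :: "nat \<Rightarrow> nat \<Rightarrow> mop \<Rightarrow> mop \<Rightarrow> mop" where
  "mmul N n A B = (\<lambda>a c. \<Sum>b\<in>idx N n. A a b * B b c)"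

definition id_op :: "nat \<Rightarrow> nat \<Rightarrow> mop" where
  "id_op N n = (\<lambda>a b. if a = b \<and> a \<in> idx N n then 1 else 0)"

text \<open>Symmetrizing projection P_n: (P psi)(a) = 1/n! * sum over sigma of psi(a o sigma).\<close>
definition sym_proj :: "nat \<Rightarrow> nat \<Rightarrow> mop" where
  "sym_proj N n = (\<lambda>a b. if a \<in> idx N n \<and> b \<in> idx N n
      then of_nat (card {\<sigma>. \<sigma> permutes {..<n} \<and> permute_list \<sigma> a = b}) / of_nat (fact n)
      else 0)"

definition Hsym :: "nat \<Rightarrow> nat \<Rightarrow> tensor set" where
  "Hsym N n = {\<psi>. (\<forall>a. a \<notin> idx N n \<longrightarrow> \<psi> a = 0) \<and> app N n (sym_proj N n) \<psi> = \<psi>}"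

definition id_tensor :: "nat \<Rightarrow> mop \<Rightarrow> mop" where
  "id_tensor l \<Gamma> = (\<lambda>a b. if take l a = take l b then \<Gamma> (drop l a) (drop l b) else 0)"

definition T_op :: "nat \<Rightarrow> nat \<Rightarrow> nat \<Rightarrow> mop \<Rightarrow> mop" where
  "T_op N j l \<Gamma> = (\<lambda>a b. (of_nat (fact (j + l)) / of_nat (fact j)) *
      mmul N (j + l) (mmul N (j + l) (sym_proj N (j + l)) (id_tensor l \<Gamma>)) (sym_proj N (j + l)) a b)"

definition proj_pow :: "(nat \<Rightarrow> complex) \<Rightarrow> mop" where
  "proj_pow u = (\<lambda>a b. prod_list (map u a) * cnj (prod_list (map u b)))"

definition unit_vec :: "nat \<Rightarrow> (nat \<Rightarrow> complex) \<Rightarrow> bool" where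
  "unit_vec N u \<longleftrightarrow> (\<Sum>i<N. (cmod (u i))\<^sup>2) = 1"

text \<open>Creation operator a^*(u): H_n -> H_{n+1}, a^*(u) phi = sqrt(n+1) P_{n+1}(u tensor phi).\<close>
definition creation :: "nat \<Rightarrow> nat \<Rightarrow> (nat \<Rightarrow> complex) \<Rightarrow> mop" where
  "creation N n u = (\<lambda>a b. of_real (sqrt (real (n + 1))) *
      (\<Sum>i<N. sym_proj N (n + 1) a (i # b) * u i))"

definition annihilation :: "nat \<Rightarrow> nat \<Rightarrow> (nat \<Rightarrow> complex) \<Rightarrow> mop" where
  "annihilation N n u = (\<lambda>b a. cnj (creation N n u a b))"

fun number_op :: "nat \<Rightarrow> nat \<Rightarrow> (nat \<Rightarrow> complex) \<Rightarrow> mop" where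
  "number_op N 0 u = (\<lambda>a b. 0)"
| "number_op N (Suc m) u = mmul N m (creation N m u) (annihilation N m u)"

definition specH :: "nat \<Rightarrow> nat \<Rightarrow> mop \<Rightarrow> complex set" where
  "specH N n A = {c. \<exists>\<psi>\<in>Hsym N n. \<psi> \<noteq> 0 \<and> app N n A \<psi> = (\<lambda>a. c * \<psi> a)}"

fun op_pow :: "nat \<Rightarrow> nat \<Rightarrow> mop \<Rightarrow> nat \<Rightarrow> mop" where
  "op_pow N n A 0 = id_op N n"
| "op_pow N n A (Suc i) = mmul N n A (op_pow N n A i)"

definition poly_op :: "nat \<Rightarrow> nat \<Rightarrow> complex poly \<Rightarrow> mop \<Rightarrow> mop" where
  "poly_op N n p A = (\<lambda>a b. \<Sum>i\<le>degree p. coeff p i * op_pow N n A i a b)"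

text \<open>Functional calculus for a diagonalizable operator A on H_n:
  f(A) = p(A), where p is the Lagrange polynomial interpolating f on the spectrum of A
  (equivalently f(A) = sum over eigenvalues of f(lambda) times the spectral projection).\<close>
definition fcalc :: "nat \<Rightarrow> nat \<Rightarrow> (complex \<Rightarrow> complex) \<Rightarrow> mop \<Rightarrow> mop" where
  "fcalc N n f A = mmul N n (sym_proj N n)
     (poly_op N n (\<Sum>c\<in>specH N n A. smult (f c)
        (\<Prod>\<mu>\<in>specH N n A - {c}. smult (1 / (c - \<mu>)) [:- \<mu>, 1:])) A)"

definition f_ell :: "nat \<Rightarrow> nat \<Rightarrow> nat \<Rightarrow> real" where
  "f_ell j l m = (if j \<le> m then fact l * fact m / fact (m - j) else 0)"

text \<open>Extension of a function on the naturals to the complex plane (the spectrum of n_u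
  lies in the naturals, so the values off the naturals are irrelevant).\<close>
definition nat_ext :: "(nat \<Rightarrow> real) \<Rightarrow> complex \<Rightarrow> complex" where
  "nat_ext g z = (if z \<in> \<nat> then of_real (g (nat \<lfloor>Re z\<rfloor>)) else 0)"

definition tensor_scale :: "complex \<Rightarrow> tensor \<Rightarrow> tensor" where
  "tensor_scale c \<psi> = (\<lambda>a. c * \<psi> a)"

end

theory Submission imports Defs begin

text \<open>Choose \<open>p\<close> with \<open>u p \<noteq> 0\<close> and complete \<open>u\<close> to a basis of \<open>\<complex>^N\<close>. In the induced product basis
  of the tensor power, \<open>I^{\<otimes>l} \<otimes> |u^{\<otimes>j}\<rangle>\<langle>u^{\<otimes>j}|\<close> keeps exactly the multi-indices whose last \<open>j\<close>
  entries are \<open>p\<close>, and permutations merely permute multi-indices. Hence on symmetric tensors both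
  \<open>n_u\<close> and \<open>T^l(|u^{\<otimes>j}\<rangle>\<langle>u^{\<otimes>j}|)\<close> are diagonal in these coordinates: the coordinate of a
  multi-index containing \<open>p\<close> exactly \<open>m\<close> times is multiplied by \<open>m\<close>, respectively by \<open>f_l(m)/j!\<close>,
  where \<open>l! m!/(m - j)!\<close> counts the permutations moving copies of \<open>p\<close> into the last \<open>j\<close> slots.
  So \<open>T^l\<close> agrees with \<open>f_l(n_u)/j!\<close>, its eigenvalues are the \<open>f_l(m)/j!\<close>, and since \<open>f_l\<close> is
  injective on \<open>m \<ge> j\<close>, the eigenspace for such \<open>m\<close> is spanned by the symmetrized basis tensors
  with exactly \<open>m\<close> copies of \<open>p\<close>; these are indexed by the multisets of size \<open>n - m\<close> over the
  remaining \<open>N - 1\<close> indices.\<close>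

lemma sum_lessThan_delta: "i < (N::nat) \<Longrightarrow> (\<Sum>k<N. (if k = i then 1 else 0) * f k) = (f i :: complex)"
proof -
  assume i: "i < N"
  have "(\<Sum>k<N. (if k = i then 1 else 0) * f k) = (\<Sum>k\<in>{..<N}. if k = i then f k else 0)"
    by (rule sum.cong) auto
  also have "\<dots> = f i" using sum.delta[OF finite_lessThan[of N], of i f] i by simp
  finally show ?thesis .
qed

lemma sum_lessThan_delta': "i < (N::nat) \<Longrightarrow> (\<Sum>k<N. f k * (if k = i then 1 else 0)) = (f i :: complex)"
  using sum_lessThan_delta[of i N f] by (simp add: mult.commute)

lemma prod_indicator_eq: "(\<Prod>t<(n::nat). (if f t = g t then 1 else 0 :: complex)) = (if \<forall>t<n. f t = g t then 1 else 0)"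
  by (induction n) (auto simp: less_Suc_eq)

lemma prod_lessThan_split: "(l::nat) \<le> n \<Longrightarrow> (\<Prod>t<n. f t) = (\<Prod>t<l. f t) * (\<Prod>t\<in>{l..<n}. (f t :: complex))"
  using prod.atLeastLessThan_concat[of 0 l n f] by (simp add: atLeast0LessThan)

lemma prod_list_map_nth: "prod_list (map f xs) = (\<Prod>t<length xs. f (xs!t))"
proof (induction xs)
  case Nil then show ?case by simp
next
  case (Cons x xs) then show ?case by (simp add: prod.lessThan_Suc_shift del: prod.lessThan_Suc)
qed

lemma prod_list_map_drop: assumes "length a = n" "l \<le> n"
  shows "prod_list (map u (drop l a)) = (\<Prod>t\<in>{l..<n}. (u (a!t) :: complex))"
proof -
  have "prod_list (map u (drop l a)) = (\<Prod>t<n - l. u (a!(t + l)))"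
    unfolding prod_list_map_nth using assms by (simp add: add.commute)
  also have "\<dots> = (\<Prod>t\<in>{0 + l..<(n - l) + l}. u (a!t))"
    by (simp only: prod.shift_bounds_nat_ivl atLeast0LessThan)
  also have "\<dots> = (\<Prod>t\<in>{l..<n}. u (a!t))" using assms by simp
  finally show ?thesis .
qed

lemma take_eq_take_iff: "length a = n \<Longrightarrow> length b = n \<Longrightarrow> l \<le> n \<Longrightarrow>
   take l a = take l b \<longleftrightarrow> (\<forall>t<l. a!t = b!t)"
  by (simp add: list_eq_iff_nth_eq)

lemma sum_indicator_card: "finite A \<Longrightarrow> (\<Sum>x\<in>A. if P x then (c::complex) else 0) = of_nat (card {x\<in>A. P x}) * c"
  by (simp add: sum.inter_filter[symmetric])

lemma sum_fun_apply: "(\<Sum>x\<in>A. f x) a = (\<Sum>x\<in>A. f x a)"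
  by (induction A rule: infinite_finite_induct) auto

lemma fact_div_fact_eq_prod: assumes "j \<le> m"
  shows "(fact l * fact m / fact (m - j) :: real) = of_nat (fact l * \<Prod>{m - j + 1..m})"
proof -
  have "(fact m :: nat) = fact (m - j) * \<Prod>{Suc (m - j)..m}"
    by (rule fact_eq_fact_times) simp
  then have "(fact m :: real) = fact (m - j) * of_nat (\<Prod>{Suc (m - j)..m})"
    by (metis of_nat_fact of_nat_mult)
  then show ?thesis by simp
qed

lemma poly_lagrange_interpolation: assumes fin: "finite Sp" and x: "x \<in> Sp"
  shows "poly (\<Sum>c\<in>Sp. smult (f c) (\<Prod>\<mu>\<in>Sp - {c}. smult (1 / (c - \<mu>)) [:- \<mu>, 1:])) x = (f x :: complex)"
proof -
  have P: "poly (\<Sum>c\<in>Sp. smult (f c) (\<Prod>\<mu>\<in>Sp - {c}. smult (1 / (c - \<mu>)) [:- \<mu>, 1:])) x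
      = (\<Sum>c\<in>Sp. f c * (\<Prod>\<mu>\<in>Sp - {c}. (1 / (c - \<mu>)) * (x - \<mu>)))"
    by (simp add: poly_sum poly_prod diff_divide_distrib)
  have z: "(\<Prod>\<mu>\<in>Sp - {c}. (1 / (c - \<mu>)) * (x - \<mu>)) = 0" if "c \<in> Sp" "c \<noteq> x" for c
    using fin x that by (simp add: prod_zero_iff) (rule bexI[of _ x], auto)
  have o: "(\<Prod>\<mu>\<in>Sp - {x}. (1 / (x - \<mu>)) * (x - \<mu>)) = 1"
    by (rule prod.neutral) auto
  have "(\<Sum>c\<in>Sp. f c * (\<Prod>\<mu>\<in>Sp - {c}. (1 / (c - \<mu>)) * (x - \<mu>)))
     = f x * (\<Prod>\<mu>\<in>Sp - {x}. (1 / (x - \<mu>)) * (x - \<mu>)) + (\<Sum>c\<in>Sp - {x}. f c * (\<Prod>\<mu>\<in>Sp - {c}. (1 / (c - \<mu>)) * (x - \<mu>)))"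
    by (rule sum.remove[OF fin x])
  also have "(\<Sum>c\<in>Sp - {x}. f c * (\<Prod>\<mu>\<in>Sp - {c}. (1 / (c - \<mu>)) * (x - \<mu>))) = 0"
    by (rule sum.neutral) (use z in auto)
  finally show ?thesis using P o by simp
qed

lemma finite_idx[simp]: "finite (idx N n)"
proof -
  have "idx N n = {xs. set xs \<subseteq> {..<N} \<and> length xs = n}" by (auto simp: idx_def)
  then show ?thesis using finite_lists_length_eq[of "{..<N}" n] by simp
qed

lemma idx_Suc: "idx N (Suc n) = (\<lambda>(k,a). k#a) ` ({..<N} \<times> idx N n)"
  by (auto simp: idx_def length_Suc_conv image_iff)

lemma idx_0[simp]: "idx N 0 = {[]}" by (auto simp: idx_def)

lemma length_idx: "a \<in> idx N n \<Longrightarrow> length a = n" by (simp add: idx_def)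

lemma idx_nth_less: "a \<in> idx N n \<Longrightarrow> t < n \<Longrightarrow> a!t < N"
  unfolding idx_def using nth_mem by fastforce

lemma sum_idx_Suc: "(\<Sum>a\<in>idx N (Suc n). F a) = (\<Sum>k<N. \<Sum>a\<in>idx N n. F (k#a))"
proof -
  have inj: "inj_on (\<lambda>(k,a). k#a) ({..<N} \<times> idx N n)" by (auto simp: inj_on_def)
  have "(\<Sum>a\<in>idx N (Suc n). F a) = (\<Sum>x\<in>{..<N} \<times> idx N n. F ((\<lambda>(k,a). k#a) x))"
    unfolding idx_Suc by (rule sum.reindex[OF inj, unfolded comp_def])
  also have "\<dots> = (\<Sum>k<N. \<Sum>a\<in>idx N n. F (k#a))"
    by (simp add: sum.cartesian_product split_def)
  finally show ?thesis .
qed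

lemma sum_idx_prod:
  "(\<Sum>a\<in>idx N n. \<Prod>t<n. f t (a!t)) = (\<Prod>t<n. \<Sum>k<N. (f t k :: 'a::comm_semiring_1))"
proof (induction n arbitrary: f)
  case 0 then show ?case by simp
next
  case (Suc n)
  have "(\<Sum>a\<in>idx N (Suc n). \<Prod>t<Suc n. f t (a!t))
      = (\<Sum>k<N. \<Sum>a\<in>idx N n. f 0 k * (\<Prod>t<n. f (Suc t) (a!t)))"
    unfolding sum_idx_Suc prod.lessThan_Suc_shift by simp
  also have "\<dots> = (\<Sum>k<N. f 0 k * (\<Sum>a\<in>idx N n. (\<Prod>t<n. f (Suc t) (a!t))))"
    by (simp add: sum_distrib_left)
  also have "\<dots> = (\<Sum>k<N. f 0 k) * (\<Prod>t<n. \<Sum>k<N. f (Suc t) k)"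
    by (simp add: Suc.IH[of "\<lambda>t. f (Suc t)"] sum_distrib_right)
  also have "\<dots> = (\<Prod>t<Suc n. \<Sum>k<N. f t k)"
    unfolding prod.lessThan_Suc_shift by simp
  finally show ?case .
qed

lemma app_mmul: "app N n (mmul N k A B) \<zeta> = app N k A (app N n B \<zeta>)"
  unfolding app_def mmul_def
  by (rule ext) (simp add: sum_distrib_left sum_distrib_right mult.assoc sum.swap[of _ "idx N n"])

lemma app_scale: "app N n (\<lambda>a b. s * M a b) \<zeta> = (\<lambda>a. s * app N n M \<zeta> a)"
  by (simp add: app_def sum_distrib_left mult.assoc)

lemma app_sum: "app N n A (\<lambda>a. \<Sum>c\<in>I. f c * X c a) = (\<lambda>a. \<Sum>c\<in>I. f c * app N n A (X c) a)"
  by (rule ext) (simp add: app_def sum_distrib_left mult_ac sum.swap[of _ I])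

lemma app_id_op: assumes z: "\<forall>a. a \<notin> idx N n \<longrightarrow> \<zeta> a = 0" shows "app N n (id_op N n) \<zeta> = \<zeta>"
proof
  fix x
  have "app N n (id_op N n) \<zeta> x = (\<Sum>b\<in>idx N n. if b = x then (if x \<in> idx N n then \<zeta> b else 0) else 0)"
    unfolding app_def id_op_def by (intro sum.cong refl) auto
  also have "\<dots> = \<zeta> x" using z by (cases "x \<in> idx N n") auto
  finally show "app N n (id_op N n) \<zeta> x = \<zeta> x" .
qed

lemma app_poly_op: "app N n (poly_op N n L A) \<zeta> = (\<lambda>a. \<Sum>i\<le>degree L. coeff L i * app N n (op_pow N n A i) \<zeta> a)"
  by (rule ext) (simp add: app_def poly_op_def sum_distrib_left sum_distrib_right mult.assoc sum.swap[of _ "idx N n"])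

interpretation tensor_space: vector_space tensor_scale
  by unfold_locales (simp_all add: tensor_scale_def fun_eq_iff algebra_simps)

definition eigenspace :: "nat \<Rightarrow> nat \<Rightarrow> mop \<Rightarrow> complex \<Rightarrow> tensor set" where
  "eigenspace N n A c = {\<psi>\<in>Hsym N n. app N n A \<psi> = tensor_scale c \<psi>}"

section \<open>Permutations and symmetric tensors\<close>

definition perms :: "nat \<Rightarrow> (nat \<Rightarrow> nat) set" where
  "perms n = {\<sigma>. \<sigma> permutes {..<n}}"

lemma finite_perms[simp]: "finite (perms n)"
  unfolding perms_def by (rule finite_permutations) simp

lemma card_perms: "card (perms n) = fact n"
  unfolding perms_def by (rule card_permutations) auto

lemma permute_list_idx: "\<sigma> \<in> perms n \<Longrightarrow> a \<in> idx N n \<Longrightarrow> permute_list \<sigma> a \<in> idx N n"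
  by (auto simp: perms_def idx_def)

lemma permute_list_inv: "\<sigma> \<in> perms n \<Longrightarrow> length a = n \<Longrightarrow> permute_list (inv \<sigma>) (permute_list \<sigma> a) = a"
proof -
  assume s: "\<sigma> \<in> perms n" and l: "length a = n"
  then have "inv \<sigma> permutes {..<length a}" by (auto simp: perms_def permutes_inv)
  then have "permute_list (\<sigma> \<circ> inv \<sigma>) a = permute_list (inv \<sigma>) (permute_list \<sigma> a)"
    by (rule permute_list_compose)
  moreover have "\<sigma> \<circ> inv \<sigma> = id" using s by (auto simp: perms_def permutes_inv_o)
  ultimately show ?thesis by simp
qed

lemma inv_perms: "\<sigma> \<in> perms n \<Longrightarrow> inv \<sigma> \<in> perms n"
  by (auto simp: perms_def permutes_inv)

lemma permute_list_permute_list: "\<sigma> \<in> perms n \<Longrightarrow> \<tau> \<in> perms n \<Longrightarrow> length a = n \<Longrightarrow>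
   permute_list \<sigma> (permute_list \<tau> a) = permute_list (\<tau> \<circ> \<sigma>) a"
  by (rule permute_list_compose[symmetric]) (simp add: perms_def)

lemma comp_perms: "\<sigma> \<in> perms n \<Longrightarrow> \<tau> \<in> perms n \<Longrightarrow> \<tau> \<circ> \<sigma> \<in> perms n"
  by (simp add: perms_def permutes_compose)

lemma sum_perms_comp_left: assumes t: "\<tau> \<in> perms n"
  shows "(\<Sum>\<sigma>\<in>perms n. g (\<tau> \<circ> \<sigma>)) = (\<Sum>\<sigma>\<in>perms n. g \<sigma>)"
proof (rule sum.reindex_bij_witness[where i="\<lambda>\<sigma>. inv \<tau> \<circ> \<sigma>" and j="\<lambda>\<sigma>. \<tau> \<circ> \<sigma>"])
  have tp: "\<tau> permutes {..<n}" using t by (simp add: perms_def)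
  show "\<And>a. a \<in> perms n \<Longrightarrow> \<tau> \<circ> (inv \<tau> \<circ> a) = a"
    using permutes_inv_o(1)[OF tp] by (simp add: o_assoc)
  show "\<And>a. a \<in> perms n \<Longrightarrow> inv \<tau> \<circ> a \<in> perms n" using comp_perms inv_perms t by blast
  show "\<And>a. a \<in> perms n \<Longrightarrow> inv \<tau> \<circ> (\<tau> \<circ> a) = a"
    using permutes_inv_o(2)[OF tp] by (simp add: o_assoc)
  show "\<And>a. a \<in> perms n \<Longrightarrow> \<tau> \<circ> a \<in> perms n" using comp_perms t by blast
  show "\<And>a. a \<in> perms n \<Longrightarrow> g (\<tau> \<circ> a) = g (\<tau> \<circ> a)" by simp
qed

lemma bij_betw_permute_list:
  assumes s: "\<sigma> \<in> perms n" shows "bij_betw (permute_list \<sigma>) (idx N n) (idx N n)"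
proof (rule bij_betw_byWitness[where f'="permute_list (inv \<sigma>)"])
  have ii: "inv (inv \<sigma>) = \<sigma>" using s by (simp add: perms_def inv_inv_eq permutes_bij)
  show "\<forall>a\<in>idx N n. permute_list (inv \<sigma>) (permute_list \<sigma> a) = a"
    using permute_list_inv[OF s] length_idx by blast
  show "\<forall>a\<in>idx N n. permute_list \<sigma> (permute_list (inv \<sigma>) a) = a"
    using permute_list_inv[OF inv_perms[OF s]] length_idx ii by fastforce
  show "permute_list \<sigma> ` idx N n \<subseteq> idx N n" "permute_list (inv \<sigma>) ` idx N n \<subseteq> idx N n"
    using permute_list_idx s inv_perms[OF s] by blast+
qed

lemma card_perms_permute_list_eq_mset:
  assumes c: "length c = n" and e: "length e = n" and eq: "mset c = mset c'"
  shows "card {\<sigma>\<in>perms n. permute_list \<sigma> e = c} = card {\<sigma>\<in>perms n. permute_list \<sigma> e = c'}"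
proof -
  obtain \<rho> where r: "\<rho> permutes {..<length c}" "permute_list \<rho> c = c'"
    using mset_eq_permutation[OF eq[symmetric]] by blast
  have rp: "\<rho> \<in> perms n" and ir: "inv \<rho> \<in> perms n" using r(1) c by (simp_all add: perms_def permutes_inv)
  have r1: "\<rho> \<circ> inv \<rho> = id" "inv \<rho> \<circ> \<rho> = id" using r(1) by (simp_all add: permutes_inv_o)
  show ?thesis
  proof (rule bij_betw_same_card[of "\<lambda>\<sigma>. \<sigma> \<circ> \<rho>"], rule bij_betw_byWitness[where f'="\<lambda>\<sigma>. \<sigma> \<circ> inv \<rho>"])
    show "\<forall>a\<in>{\<sigma> \<in> perms n. permute_list \<sigma> e = c}. a \<circ> \<rho> \<circ> inv \<rho> = a"
      using r1 by (simp add: o_assoc[symmetric])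
    show "\<forall>a\<in>{\<sigma> \<in> perms n. permute_list \<sigma> e = c'}. a \<circ> inv \<rho> \<circ> \<rho> = a"
      using r1 by (simp add: o_assoc[symmetric])
    show "(\<lambda>\<sigma>. \<sigma> \<circ> \<rho>) ` {\<sigma> \<in> perms n. permute_list \<sigma> e = c} \<subseteq> {\<sigma> \<in> perms n. permute_list \<sigma> e = c'}"
      using permute_list_permute_list[OF rp _ e] comp_perms[OF rp] r(2) by auto
    have "permute_list (inv \<rho>) c' = c" using r(2) permute_list_inv[OF rp c] by simp
    then show "(\<lambda>\<sigma>. \<sigma> \<circ> inv \<rho>) ` {\<sigma> \<in> perms n. permute_list \<sigma> e = c'} \<subseteq> {\<sigma> \<in> perms n. permute_list \<sigma> e = c}"
      using permute_list_permute_list[OF ir _ e] comp_perms[OF ir] by auto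
  qed
qed

lemma app_sym_proj_outside: "a \<notin> idx N n \<Longrightarrow> app N n (sym_proj N n) \<psi> a = 0"
  by (simp add: app_def sym_proj_def)

lemma app_sym_proj: assumes a: "a \<in> idx N n"
  shows "app N n (sym_proj N n) \<psi> a = (\<Sum>\<sigma>\<in>perms n. \<psi> (permute_list \<sigma> a)) / of_nat (fact n)"
proof -
  have "(\<Sum>\<sigma>\<in>perms n. \<psi> (permute_list \<sigma> a))
      = (\<Sum>b\<in>idx N n. \<Sum>\<sigma>\<in>{\<sigma>\<in>perms n. permute_list \<sigma> a = b}. \<psi> (permute_list \<sigma> a))"
    by (rule sum.group[symmetric]) (use permute_list_idx a in auto)
  also have "\<dots> = (\<Sum>b\<in>idx N n. of_nat (card {\<sigma>. \<sigma> permutes {..<n} \<and> permute_list \<sigma> a = b}) * \<psi> b)"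
    by (intro sum.cong refl) (simp add: perms_def)
  finally show ?thesis using a
    by (simp add: app_def sym_proj_def sum_divide_distrib)
qed

lemma card_permute_list_eq_commute: "card {\<sigma>. \<sigma> permutes {..<n} \<and> permute_list \<sigma> a = b}
   = card {\<sigma>. \<sigma> permutes {..<n} \<and> permute_list \<sigma> b = a}" if "length a = n" "length b = n"
proof -
  have *: "inv \<sigma> \<in> {\<sigma>. \<sigma> permutes {..<n} \<and> permute_list \<sigma> y = x}"
    if "\<sigma> \<in> {\<sigma>. \<sigma> permutes {..<n} \<and> permute_list \<sigma> x = y}" "length x = n" for \<sigma> x y
  proof -
    have s: "\<sigma> \<in> perms n" "permute_list \<sigma> x = y" using that by (auto simp: perms_def)
    have "permute_list (inv \<sigma>) y = x" using permute_list_inv[OF s(1) that(2)] s(2) by simp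
    then show ?thesis using inv_perms[OF s(1)] by (simp add: perms_def)
  qed
  have ii: "inv (inv \<sigma>) = \<sigma>" if "\<sigma> permutes S" for \<sigma> and S :: "nat set"
    using that by (simp add: inv_inv_eq permutes_bij)
  have "bij_betw inv {\<sigma>. \<sigma> permutes {..<n} \<and> permute_list \<sigma> a = b} {\<sigma>. \<sigma> permutes {..<n} \<and> permute_list \<sigma> b = a}"
    by (rule bij_betw_byWitness[where f'=inv]) (use ii * that in blast)+
  then show ?thesis by (rule bij_betw_same_card)
qed

lemma sym_proj_commute: "sym_proj N n a b = sym_proj N n b a"
proof (cases "a \<in> idx N n \<and> b \<in> idx N n")
  case True then show ?thesis unfolding sym_proj_def using card_permute_list_eq_commute[of a n b] by (simp add: idx_def)
next
  case False then show ?thesis unfolding sym_proj_def by auto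
qed

lemma sym_proj_cnj: "cnj (sym_proj N n a b) = sym_proj N n b a"
  unfolding sym_proj_commute[of N n a b] by (simp add: sym_proj_def)

definition sym_tensor :: "nat \<Rightarrow> nat \<Rightarrow> tensor \<Rightarrow> bool" where
  "sym_tensor N n \<zeta> \<longleftrightarrow> (\<forall>a. a \<notin> idx N n \<longrightarrow> \<zeta> a = 0) \<and>
     (\<forall>\<sigma>\<in>perms n. \<forall>a\<in>idx N n. \<zeta> (permute_list \<sigma> a) = \<zeta> a)"

lemma sym_tensor_scale: "sym_tensor N n \<zeta> \<Longrightarrow> sym_tensor N n (\<lambda>a. s * \<zeta> a)"
  by (simp add: sym_tensor_def)

lemma sym_tensor_sym_proj: "sym_tensor N n (app N n (sym_proj N n) \<zeta>)"
  unfolding sym_tensor_def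
proof (intro conjI allI impI ballI)
  fix a assume "a \<notin> idx N n" then show "app N n (sym_proj N n) \<zeta> a = 0" by (rule app_sym_proj_outside)
next
  fix \<tau> a assume t: "\<tau> \<in> perms n" and a: "a \<in> idx N n"
  have "app N n (sym_proj N n) \<zeta> (permute_list \<tau> a)
      = (\<Sum>\<sigma>\<in>perms n. \<zeta> (permute_list \<sigma> (permute_list \<tau> a))) / of_nat (fact n)"
    by (rule app_sym_proj[OF permute_list_idx[OF t a]])
  also have "\<dots> = (\<Sum>\<sigma>\<in>perms n. \<zeta> (permute_list (\<tau> \<circ> \<sigma>) a)) / of_nat (fact n)"
    using permute_list_permute_list[OF _ t length_idx[OF a]] by simp
  also have "\<dots> = (\<Sum>\<sigma>\<in>perms n. \<zeta> (permute_list \<sigma> a)) / of_nat (fact n)"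
    using sum_perms_comp_left[OF t, of "\<lambda>\<sigma>. \<zeta> (permute_list \<sigma> a)"] by simp
  also have "\<dots> = app N n (sym_proj N n) \<zeta> a" by (rule app_sym_proj[OF a, symmetric])
  finally show "app N n (sym_proj N n) \<zeta> (permute_list \<tau> a) = app N n (sym_proj N n) \<zeta> a" .
qed

lemma sym_proj_sym_tensor: assumes "sym_tensor N n \<zeta>" shows "app N n (sym_proj N n) \<zeta> = \<zeta>"
proof
  fix a show "app N n (sym_proj N n) \<zeta> a = \<zeta> a"
  proof (cases "a \<in> idx N n")
    case True
    then have "app N n (sym_proj N n) \<zeta> a = (\<Sum>\<sigma>\<in>perms n. \<zeta> a) / of_nat (fact n)"
      using assms app_sym_proj[OF True] by (simp add: sym_tensor_def)
    then show ?thesis by (simp add: card_perms)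
  next
    case False then show ?thesis using assms app_sym_proj_outside[OF False] by (simp add: sym_tensor_def)
  qed
qed

lemma Hsym_iff_sym_tensor: "\<psi> \<in> Hsym N n \<longleftrightarrow> sym_tensor N n \<psi>"
proof
  assume "\<psi> \<in> Hsym N n"
  then have "app N n (sym_proj N n) \<psi> = \<psi>" by (simp add: Hsym_def)
  then show "sym_tensor N n \<psi>" using sym_tensor_sym_proj[of N n \<psi>] by simp
next
  assume "sym_tensor N n \<psi>" then show "\<psi> \<in> Hsym N n" using sym_proj_sym_tensor by (auto simp: Hsym_def sym_tensor_def)
qed

section \<open>Counting permutations\<close>

definition dlists :: "nat \<Rightarrow> nat set \<Rightarrow> nat list set" where
  "dlists k A = {xs. length xs = k \<and> distinct xs \<and> set xs \<subseteq> A}"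

lemma finite_dlists: "finite A \<Longrightarrow> finite (dlists k A)"
  unfolding dlists_def by (rule finite_subset[OF _ finite_lists_length_eq[of A k]]) auto

lemma card_dlists: assumes "finite A"
  shows "card (dlists k A) = (if k \<le> card A then \<Prod>{card A - k + 1 .. card A} else 0)"
proof (cases "k \<le> card A")
  case True then show ?thesis unfolding dlists_def using card_lists_distinct_length_eq[OF assms True] by simp
next
  case False
  have "dlists k A = {}"
  proof (rule ccontr)
    assume "dlists k A \<noteq> {}"
    then obtain xs where xs: "length xs = k" "distinct xs" "set xs \<subseteq> A" by (auto simp: dlists_def)
    then show False using False card_mono[OF assms xs(3)] distinct_card[OF xs(2)] by simp
  qed
  then show ?thesis using False by simp
qed

lemma permute_list_upt:
  assumes "\<sigma> \<in> perms n" shows "permute_list \<sigma> [0..<n] = map \<sigma> [0..<n]"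
proof -
  have "\<sigma> i < n" if "i < n" for i
    using assms that permutes_in_image[of \<sigma> "{..<n}" i] by (simp add: perms_def)
  then show ?thesis by (simp add: permute_list_def)
qed

lemma bij_betw_perms_dlists: "bij_betw (\<lambda>\<sigma>. map \<sigma> [0..<n]) (perms n) (dlists n {..<n})"
proof (rule bij_betw_imageI)
  show "inj_on (\<lambda>\<sigma>. map \<sigma> [0..<n]) (perms n)"
  proof (rule inj_onI)
    fix \<sigma> \<tau> assume "\<sigma> \<in> perms n" "\<tau> \<in> perms n" "map \<sigma> [0..<n] = map \<tau> [0..<n]"
    then show "\<sigma> = \<tau>" by (auto simp: perms_def fun_eq_iff permutes_not_in)
  qed
  show "(\<lambda>\<sigma>. map \<sigma> [0..<n]) ` perms n = dlists n {..<n}"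
  proof (intro equalityI subsetI)
    fix xs assume "xs \<in> (\<lambda>\<sigma>. map \<sigma> [0..<n]) ` perms n"
    then obtain \<sigma> where \<sigma>: "\<sigma> \<in> perms n" "xs = map \<sigma> [0..<n]" by blast
    then have "xs = permute_list \<sigma> [0..<n]" using permute_list_upt by simp
    then show "xs \<in> dlists n {..<n}" using \<sigma>(1) by (auto simp: dlists_def perms_def)
  next
    fix xs assume "xs \<in> dlists n {..<n}"
    then have xs: "length xs = n" "distinct xs" "set xs \<subseteq> {..<n}" by (auto simp: dlists_def)
    then have "set xs = {..<n}" by (intro card_subset_eq) (auto simp: distinct_card)
    then have "mset xs = mset [0..<n]"
      using xs(2) set_eq_iff_mset_eq_distinct[of xs "[0..<n]"] by (simp add: atLeast0LessThan)
    then obtain \<sigma> where "\<sigma> permutes {..<n}" "permute_list \<sigma> [0..<n] = xs"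
      by (metis length_upt minus_nat.diff_0 mset_eq_permutation)
    then show "xs \<in> (\<lambda>\<sigma>. map \<sigma> [0..<n]) ` perms n"
      using permute_list_upt by (auto simp: perms_def)
  qed
qed

lemma card_dlists_complement:
  assumes "distinct zs" "set zs \<subseteq> {..<n}" "length zs = n - l" "l \<le> n"
  shows "card (dlists l ({..<n} - set zs)) = fact l"
proof -
  have "card ({..<n} - set zs) = l" using assms by (simp add: card_Diff_subset distinct_card)
  then show ?thesis by (simp add: card_dlists fact_prod)
qed

text \<open>A distinct list whose last \<open>n - l\<close> entries lie in \<open>Q\<close> splits into the suffix, a distinct
  list in \<open>Q\<close>, and the prefix, any of the \<open>l!\<close> arrangements of the remaining indices.\<close>
lemma card_dlists_suffix_subset:
  assumes Q: "Q \<subseteq> {..<n}" and ln: "l \<le> n"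
  shows "card {xs\<in>dlists n {..<n}. set (drop l xs) \<subseteq> Q}
       = (if n - l \<le> card Q then fact l * \<Prod>{card Q - (n - l) + 1 .. card Q} else 0)"
proof -
  define j where "j = n - l"
  have fQ: "finite Q" using Q finite_subset by blast
  let ?S = "SIGMA zs:dlists j Q. dlists l ({..<n} - set zs)"
  let ?f = "\<lambda>(zs, ys). ys @ zs"
  have eq: "{xs\<in>dlists n {..<n}. set (drop l xs) \<subseteq> Q} = ?f ` ?S"
  proof
    show "{xs\<in>dlists n {..<n}. set (drop l xs) \<subseteq> Q} \<subseteq> ?f ` ?S"
    proof clarify
      fix xs assume xs: "xs \<in> dlists n {..<n}" "set (drop l xs) \<subseteq> Q"
      have l: "length xs = n" "distinct xs" "set xs \<subseteq> {..<n}" using xs by (auto simp: dlists_def)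
      have d: "distinct (take l xs @ drop l xs)" using l by simp
      have "drop l xs \<in> dlists j Q" using xs l by (auto simp: dlists_def j_def)
      moreover have "take l xs \<in> dlists l ({..<n} - set (drop l xs))"
        using l ln d set_take_subset[of l xs] unfolding dlists_def distinct_append by auto
      ultimately have "(drop l xs, take l xs) \<in> ?S" by simp
      then show "xs \<in> ?f ` ?S" by (rule image_eqI[rotated]) simp
    qed
    show "?f ` ?S \<subseteq> {xs\<in>dlists n {..<n}. set (drop l xs) \<subseteq> Q}"
      using Q ln by (auto simp: dlists_def j_def) blast+
  qed
  have inj: "inj_on ?f ?S"
  proof (rule inj_onI)
    fix x y assume "x \<in> ?S" "y \<in> ?S" "?f x = ?f y"
    then show "x = y" by (cases x, cases y) (auto simp: dlists_def append_eq_append_conv)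
  qed
  have card_prefix: "card (dlists l ({..<n} - set zs)) = fact l" if "zs \<in> dlists j Q" for zs
    using card_dlists_complement[of zs n l] that Q ln by (auto simp: dlists_def j_def)
  have "card {xs\<in>dlists n {..<n}. set (drop l xs) \<subseteq> Q} = card ?S"
    unfolding eq by (rule card_image[OF inj])
  also have "\<dots> = (\<Sum>zs\<in>dlists j Q. card (dlists l ({..<n} - set zs)))"
    by (rule card_SigmaI) (auto intro: fQ finite_dlists)
  also have "\<dots> = card (dlists j Q) * fact l" using card_prefix by simp
  finally show ?thesis using card_dlists[OF fQ, of j] by (simp add: j_def)
qed

lemma card_perms_suffix_const: assumes c: "length c = n" and ln: "l \<le> n"
  shows "card {\<sigma>\<in>perms n. \<forall>t\<in>{l..<n}. c!(\<sigma> t) = p}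
    = (if n - l \<le> card {t. t < n \<and> c!t = p}
       then fact l * \<Prod>{card {t. t < n \<and> c!t = p} - (n - l) + 1 .. card {t. t < n \<and> c!t = p}} else 0)"
proof -
  let ?Q = "{t. t < n \<and> c!t = p}"
  have iff: "set (drop l (map \<sigma> [0..<n])) \<subseteq> ?Q \<longleftrightarrow> (\<forall>t\<in>{l..<n}. c!(\<sigma> t) = p)"
    if "\<sigma> \<in> perms n" for \<sigma>
  proof -
    have "set (drop l (map \<sigma> [0..<n])) = \<sigma> ` {l..<n}" using ln by (simp add: drop_map)
    moreover have "\<sigma> t < n" if "t < n" for t
      using permutes_in_image[of \<sigma> "{..<n}" t] \<open>\<sigma> \<in> perms n\<close> that by (simp add: perms_def)
    ultimately show ?thesis by auto
  qed
  have "bij_betw (\<lambda>\<sigma>. map \<sigma> [0..<n]) {\<sigma>\<in>perms n. \<forall>t\<in>{l..<n}. c!(\<sigma> t) = p}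
      {xs\<in>dlists n {..<n}. set (drop l xs) \<subseteq> ?Q}"
    using bij_betw_perms_dlists iff by (rule bij_betw_Collect)
  then have "card {\<sigma>\<in>perms n. \<forall>t\<in>{l..<n}. c!(\<sigma> t) = p}
      = card {xs\<in>dlists n {..<n}. set (drop l xs) \<subseteq> ?Q}"
    by (rule bij_betw_same_card)
  also have "\<dots> = (if n - l \<le> card ?Q then fact l * \<Prod>{card ?Q - (n - l) + 1 .. card ?Q} else 0)"
    by (rule card_dlists_suffix_subset) (use ln in auto)
  finally show ?thesis .
qed

lemma card_perms_head_const: assumes c: "length c = n" and n: "n \<ge> 1"
  shows "card {\<sigma>\<in>perms n. c!(\<sigma> 0) = p} = card {t. t < n \<and> c!t = p} * fact (n - 1)"
proof -
  define \<tau> where "\<tau> = Transposition.transpose 0 (n - 1)"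
  have tp: "\<tau> \<in> perms n" using n by (simp add: \<tau>_def perms_def permutes_swap_id)
  have tt: "\<tau> \<circ> \<tau> = id" by (simp add: \<tau>_def)
  have "bij_betw (\<lambda>\<sigma>. \<sigma> \<circ> \<tau>) {\<sigma>\<in>perms n. c!(\<sigma> 0) = p} {\<sigma>\<in>perms n. \<forall>t\<in>{n-1..<n}. c!(\<sigma> t) = p}"
  proof (rule bij_betw_byWitness[where f'="\<lambda>\<sigma>. \<sigma> \<circ> \<tau>"])
    show "\<forall>a\<in>{\<sigma> \<in> perms n. c ! \<sigma> 0 = p}. a \<circ> \<tau> \<circ> \<tau> = a" using tt by (simp add: o_assoc[symmetric])
    show "\<forall>a\<in>{\<sigma> \<in> perms n. \<forall>t\<in>{n - 1..<n}. c ! \<sigma> t = p}. a \<circ> \<tau> \<circ> \<tau> = a"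
      using tt by (simp add: o_assoc[symmetric])
    have e: "{n - 1..<n} = {n - 1}" using n by auto
    show "(\<lambda>\<sigma>. \<sigma> \<circ> \<tau>) ` {\<sigma> \<in> perms n. c ! \<sigma> 0 = p} \<subseteq> {\<sigma> \<in> perms n. \<forall>t\<in>{n - 1..<n}. c ! \<sigma> t = p}"
      using comp_perms[OF tp] unfolding e by (auto simp: \<tau>_def)
    show "(\<lambda>\<sigma>. \<sigma> \<circ> \<tau>) ` {\<sigma> \<in> perms n. \<forall>t\<in>{n - 1..<n}. c ! \<sigma> t = p} \<subseteq> {\<sigma> \<in> perms n. c ! \<sigma> 0 = p}"
      using comp_perms[OF tp] unfolding e by (auto simp: \<tau>_def)
  qed
  then have "card {\<sigma>\<in>perms n. c!(\<sigma> 0) = p} = card {\<sigma>\<in>perms n. \<forall>t\<in>{n-1..<n}. c!(\<sigma> t) = p}"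
    by (rule bij_betw_same_card)
  also have "\<dots> = (if n - (n - 1) \<le> card {t. t < n \<and> c!t = p}
       then fact (n - 1) * \<Prod>{card {t. t < n \<and> c!t = p} - (n - (n - 1)) + 1 .. card {t. t < n \<and> c!t = p}} else 0)"
    by (rule card_perms_suffix_const[OF c]) simp
  also have "\<dots> = card {t. t < n \<and> c!t = p} * fact (n - 1)"
  proof (cases "card {t. t < n \<and> c!t = p} = 0")
    case True then show ?thesis using n by simp
  next
    case False
    then have "1 \<le> card {t. t < n \<and> c!t = p}" by linarith
    then show ?thesis using n by (simp add: mult.commute)
  qed
  finally show ?thesis .
qed

lemma app_creation: "app N m (creation N m u) \<phi> a
   = of_real (sqrt (real (Suc m))) * app N (Suc m) (sym_proj N (Suc m)) (\<lambda>b. u (hd b) * \<phi> (tl b)) a"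
proof -
  have "app N m (creation N m u) \<phi> a
      = of_real (sqrt (real (Suc m))) * (\<Sum>c\<in>idx N m. \<Sum>i<N. sym_proj N (Suc m) a (i # c) * u i * \<phi> c)"
    by (simp add: app_def creation_def sum_distrib_left sum_distrib_right mult.assoc)
  also have "(\<Sum>c\<in>idx N m. \<Sum>i<N. sym_proj N (Suc m) a (i # c) * u i * \<phi> c)
      = (\<Sum>i<N. \<Sum>c\<in>idx N m. sym_proj N (Suc m) a (i # c) * (u (hd (i#c)) * \<phi> (tl (i#c))))"
    by (subst sum.swap) (simp add: mult.assoc)
  also have "\<dots> = app N (Suc m) (sym_proj N (Suc m)) (\<lambda>b. u (hd b) * \<phi> (tl b)) a"
    unfolding app_def sum_idx_Suc ..
  finally show ?thesis .
qed

lemma app_annihilation_sym_tensor: assumes z: "sym_tensor N (Suc m) \<zeta>"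
  shows "app N (Suc m) (annihilation N m u) \<zeta> c = of_real (sqrt (real (Suc m))) * (\<Sum>i<N. cnj (u i) * \<zeta> (i # c))"
proof -
  have "app N (Suc m) (annihilation N m u) \<zeta> c
     = (\<Sum>b\<in>idx N (Suc m). of_real (sqrt (real (Suc m))) * (\<Sum>i<N. sym_proj N (Suc m) (i # c) b * cnj (u i)) * \<zeta> b)"
    by (simp add: app_def annihilation_def creation_def sym_proj_cnj)
  also have "\<dots> = of_real (sqrt (real (Suc m))) * (\<Sum>i<N. cnj (u i) * (\<Sum>b\<in>idx N (Suc m). sym_proj N (Suc m) (i # c) b * \<zeta> b))"
    by (simp add: sum_distrib_left sum_distrib_right mult_ac sum.swap[of _ "idx N (Suc m)"])
  also have "\<dots> = of_real (sqrt (real (Suc m))) * (\<Sum>i<N. cnj (u i) * \<zeta> (i # c))"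
  proof -
    have "(\<Sum>b\<in>idx N (Suc m). sym_proj N (Suc m) (i # c) b * \<zeta> b) = \<zeta> (i # c)" for i
      using fun_cong[OF sym_proj_sym_tensor[OF z], of "i # c"] by (simp add: app_def)
    then show ?thesis by simp
  qed
  finally show ?thesis .
qed

lemma app_number_op: "app N (Suc m) (number_op N (Suc m) u) \<zeta> = (\<lambda>a. of_real (sqrt (real (Suc m))) *
   app N (Suc m) (sym_proj N (Suc m)) (\<lambda>b. u (hd b) * app N (Suc m) (annihilation N m u) \<zeta> (tl b)) a)"
proof -
  have "app N (Suc m) (number_op N (Suc m) u) \<zeta> = app N m (creation N m u) (app N (Suc m) (annihilation N m u) \<zeta>)"
    unfolding number_op.simps by (rule app_mmul)
  also have "\<dots> = (\<lambda>a. of_real (sqrt (real (Suc m))) *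
   app N (Suc m) (sym_proj N (Suc m)) (\<lambda>b. u (hd b) * app N (Suc m) (annihilation N m u) \<zeta> (tl b)) a)"
    by (rule ext, rule app_creation)
  finally show ?thesis .
qed

lemma sym_tensor_number_op: "sym_tensor N n (app N n (number_op N n u) \<zeta>)"
proof (cases n)
  case 0 then show ?thesis by (simp add: sym_tensor_def app_def)
next
  case (Suc m) then show ?thesis unfolding Suc app_number_op by (intro sym_tensor_scale sym_tensor_sym_proj)
qed

lemma app_T_op: "app N (j + l) (T_op N j l \<Gamma>) \<zeta> = (\<lambda>a. (of_nat (fact (j + l)) / of_nat (fact j)) *
   app N (j + l) (sym_proj N (j + l)) (app N (j + l) (id_tensor l \<Gamma>) (app N (j + l) (sym_proj N (j + l)) \<zeta>)) a)"
  unfolding T_op_def app_scale by (simp add: app_mmul)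

lemma sym_tensor_T_op: "sym_tensor N (j + l) (app N (j + l) (T_op N j l \<Gamma>) \<zeta>)"
  unfolding app_T_op by (intro sym_tensor_scale sym_tensor_sym_proj)

lemma nat_ext_of_nat: "nat_ext g (of_nat m) = of_real (g m)"
  by (simp add: nat_ext_def)

lemma f_ell_pos: "j \<le> m \<Longrightarrow> f_ell j l m > 0"
  by (simp add: f_ell_def)

lemma f_ell_nonneg: "f_ell j l m \<ge> 0"
  by (simp add: f_ell_def)

lemma f_ell_Suc: assumes "j \<le> m"
  shows "f_ell j l (Suc m) = f_ell j l m * (real (Suc m) / real (Suc m - j))"
proof -
  have e: "Suc m - j = Suc (m - j)" using assms by simp
  have A: "(fact (Suc m) :: real) = real (Suc m) * fact m" by (rule fact_Suc)
  have B: "(fact (Suc m - j) :: real) = real (Suc m - j) * fact (m - j)" unfolding e by (rule fact_Suc)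
  have "f_ell j l (Suc m) = fact l * (real (Suc m) * fact m) / (real (Suc m - j) * fact (m - j))"
    using assms unfolding f_ell_def A B by simp
  also have "\<dots> = (fact l * fact m / fact (m - j)) * (real (Suc m) / real (Suc m - j))"
    by (simp add: divide_inverse mult_ac)
  also have "\<dots> = f_ell j l m * (real (Suc m) / real (Suc m - j))"
    using assms by (simp add: f_ell_def)
  finally show ?thesis .
qed

lemma f_ell_le_Suc: "f_ell j l m \<le> f_ell j l (Suc m)"
proof (cases "j \<le> m")
  case True
  have "real (Suc m - j) \<le> real (Suc m)" by simp
  moreover have "real (Suc m - j) > 0" using True by simp
  ultimately have "real (Suc m) / real (Suc m - j) \<ge> 1" by simp
  then have "f_ell j l m * 1 \<le> f_ell j l m * (real (Suc m) / real (Suc m - j))"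
    by (intro mult_left_mono f_ell_nonneg)
  then show ?thesis using f_ell_Suc[OF True] by simp
next
  case False
  then have "f_ell j l m = 0" by (simp add: f_ell_def)
  then show ?thesis using f_ell_nonneg[of j l "Suc m"] by simp
qed

lemma mono_f_ell: "mono (f_ell j l)"
  unfolding mono_iff_le_Suc using f_ell_le_Suc by blast

lemma f_ell_less_Suc: assumes "1 \<le> j" "j \<le> m" shows "f_ell j l m < f_ell j l (Suc m)"
proof -
  have "real (Suc m - j) < real (Suc m)" using assms by simp
  moreover have "real (Suc m - j) > 0" using assms by simp
  ultimately have "real (Suc m) / real (Suc m - j) > 1" by simp
  then have "f_ell j l m * 1 < f_ell j l m * (real (Suc m) / real (Suc m - j))"
    by (intro mult_strict_left_mono f_ell_pos assms)
  then show ?thesis using f_ell_Suc[OF assms(2)] by simp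
qed

lemma strict_mono_f_ell_shift: "1 \<le> j \<Longrightarrow> strict_mono (\<lambda>i. f_ell j l (j + i))"
  unfolding strict_mono_Suc_iff by (simp add: f_ell_less_Suc)

lemma f_ell_inj: assumes "1 \<le> j" "j \<le> m" "f_ell j l m' = f_ell j l m" shows "m' = m"
proof -
  have "j \<le> m'"
  proof (rule ccontr)
    assume "\<not> j \<le> m'"
    then have "f_ell j l m' = 0" by (simp add: f_ell_def)
    then show False using f_ell_pos[OF assms(2), of l] assms(3) by simp
  qed
  then have "f_ell j l (j + (m' - j)) = f_ell j l (j + (m - j))" using assms by simp
  then have "m' - j = m - j" using strict_mono_eq[OF strict_mono_f_ell_shift[OF assms(1)]] by blast
  then show ?thesis using \<open>j \<le> m'\<close> assms(2) by simp
qed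

lemma f_ell_div_fact: assumes "M \<le> m"
  shows "(of_real (f_ell M k m) / of_nat (fact M) :: complex) = of_real (fact k * fact m / (fact M * fact (m - M)))"
proof -
  have "(fact k * fact m / (fact M * fact (m - M)) :: real) = (fact k * fact m / fact (m - M)) / fact M"
    by (simp add: divide_inverse mult_ac)
  then show ?thesis using assms by (simp add: f_ell_def)
qed

section \<open>Coordinates adapted to a unit vector\<close>

text \<open>With \<open>u p \<noteq> 0\<close>, the vectors \<open>bvec i\<close> form a basis of \<open>\<complex>^N\<close> with \<open>bvec p = u\<close>, and the
  \<open>dvec i\<close> are the dual basis for the bilinear pairing \<open>\<Sum>k. x k * y k\<close>; both are tensored up to
  multi-indices, \<open>coord c\<close> being the coordinate functional of the product basis vector \<open>btensor c\<close>.
  Since \<open>dvec i\<close> annihilates \<open>u\<close> for \<open>i \<noteq> p\<close> and \<open>dvec p = cnj u\<close>, all operators of interest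
  become diagonal in these coordinates.\<close>

locale adapted_basis =
  fixes N :: nat and u :: "nat \<Rightarrow> complex" and p :: nat
  assumes pN: "p < N" and up: "u p \<noteq> 0" and unit: "unit_vec N u"
begin

definition bvec :: "nat \<Rightarrow> nat \<Rightarrow> complex" where
  "bvec i k = (if i = p then u k else (if k = i then 1 else 0) - (if k = p then cnj (u i) / cnj (u p) else 0))"

definition dvec :: "nat \<Rightarrow> nat \<Rightarrow> complex" where
  "dvec i k = (if i = p then cnj (u k) else (if k = i then 1 else 0) - u i * cnj (u k))"

lemma sum_cnj_mult_self: "(\<Sum>k<N. cnj (u k) * u k) = 1"
proof -
  have "(\<Sum>k<N. cnj (u k) * u k) = (\<Sum>k<N. complex_of_real ((cmod (u k))\<^sup>2))"
    by (intro sum.cong refl) (use complex_norm_square in \<open>simp add: mult.commute\<close>)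
  also have "\<dots> = 1" using unit unfolding unit_vec_def by (metis of_real_1 of_real_sum)
  finally show ?thesis .
qed

lemma cnj_u_p_nonzero: "cnj (u p) \<noteq> 0" using up by simp

lemma sum_dvec_bvec: assumes "i < N" "i' < N"
  shows "(\<Sum>k<N. dvec i k * bvec i' k) = (if i = i' then 1 else 0)"
proof (cases "i = p")
  case ip: True
  show ?thesis
  proof (cases "i' = p")
    case True then show ?thesis using ip sum_cnj_mult_self by (simp add: dvec_def bvec_def)
  next
    case False
    have "(\<Sum>k<N. dvec i k * bvec i' k) = (\<Sum>k<N. (if k = i' then 1 else 0) * cnj (u k))
        - (\<Sum>k<N. (if k = p then 1 else 0) * (cnj (u k) * (cnj (u i') / cnj (u p))))"
      unfolding sum_subtractf[symmetric] using ip False by (intro sum.cong refl) (auto simp: dvec_def bvec_def)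
    also have "\<dots> = 0" using assms pN cnj_u_p_nonzero by (simp only: sum_lessThan_delta) simp
    finally show ?thesis using ip False by simp
  qed
next
  case inp: False
  show ?thesis
  proof (cases "i' = p")
    case True
    have "(\<Sum>k<N. dvec i k * bvec i' k) = (\<Sum>k<N. (if k = i then 1 else 0) * u k)
        - u i * (\<Sum>k<N. cnj (u k) * u k)"
      using inp True by (simp add: dvec_def bvec_def sum_subtractf[symmetric] sum_distrib_left algebra_simps)
    also have "\<dots> = 0" using assms sum_cnj_mult_self by (simp only: sum_lessThan_delta) simp
    finally show ?thesis using inp True by simp
  next
    case False
    define c where "c = cnj (u i') / cnj (u p)"
    have "(\<Sum>k<N. dvec i k * bvec i' k) = (\<Sum>k<N. ((if k = i then 1 else 0) - u i * cnj (u k))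
           * ((if k = i' then 1 else 0) - (if k = p then 1 else 0) * c))"
      using inp False by (intro sum.cong refl) (simp add: dvec_def bvec_def c_def)
    also have "\<dots> = (\<Sum>k<N. (if k = i then 1 else 0) * (if k = i' then 1 else 0))
        - (\<Sum>k<N. (if k = i then 1 else 0) * (if k = p then 1 else 0)) * c
        - u i * (\<Sum>k<N. (if k = i' then 1 else 0) * cnj (u k))
        + u i * c * (\<Sum>k<N. (if k = p then 1 else 0) * cnj (u k))"
      by (simp add: algebra_simps sum_subtractf sum.distrib sum_distrib_left sum_distrib_right)
    also have "\<dots> = (if i = i' then 1 else 0)"
      using assms pN inp cnj_u_p_nonzero by (simp only: sum_lessThan_delta) (simp add: c_def)
    finally show ?thesis .
  qed
qed

lemma sum_bvec_dvec: assumes "k < N" "k' < N"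
  shows "(\<Sum>i<N. bvec i k * dvec i k') = (if k = k' then 1 else 0)"
proof -
  have fin: "finite {..<N}" by simp
  have split: "(\<Sum>i<N. bvec i k * dvec i k') = bvec p k * dvec p k' + (\<Sum>i\<in>{..<N}-{p}. bvec i k * dvec i k')"
    using sum.remove[OF fin, of p] pN by simp
  have S: "(\<Sum>i\<in>{..<N}-{p}. cnj (u i) * u i) = 1 - cnj (u p) * u p"
    using sum.remove[OF fin, of p "\<lambda>i. cnj (u i) * u i"] pN sum_cnj_mult_self by (simp add: algebra_simps)
  show ?thesis
  proof (cases "k = p")
    case kp: False
    have "(\<Sum>i\<in>{..<N}-{p}. bvec i k * dvec i k') = (\<Sum>i\<in>{..<N}-{p}. if i = k then dvec i k' else 0)"
      by (intro sum.cong refl) (auto simp: bvec_def kp)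
    also have "\<dots> = dvec k k'" using assms kp by simp
    finally show ?thesis using split kp by (simp add: bvec_def dvec_def)
  next
    case kp: True
    have "(\<Sum>i\<in>{..<N}-{p}. bvec i k * dvec i k') = (\<Sum>i\<in>{..<N}-{p}.
        - (cnj (u i) / cnj (u p)) * ((if k' = i then 1 else 0) - u i * cnj (u k')))"
      by (intro sum.cong refl) (auto simp: bvec_def dvec_def kp)
    also have "\<dots> = - (\<Sum>i\<in>{..<N}-{p}. (if i = k' then 1 else 0) * (cnj (u i) / cnj (u p)))
          + cnj (u k') / cnj (u p) * (\<Sum>i\<in>{..<N}-{p}. cnj (u i) * u i)"
      by (simp add: algebra_simps sum_subtractf sum.distrib sum_distrib_left sum_distrib_right sum_negf)
         (intro sum.cong refl, auto)
    also have "(\<Sum>i\<in>{..<N}-{p}. (if i = k' then 1 else 0) * (cnj (u i) / cnj (u p)))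
        = (\<Sum>i\<in>{..<N}-{p}. if i = k' then cnj (u i) / cnj (u p) else 0)"
      by (intro sum.cong refl) auto
    also have "\<dots> = (if k' \<noteq> p then cnj (u k') / cnj (u p) else 0)"
      using assms by simp
    finally have "(\<Sum>i\<in>{..<N}-{p}. bvec i k * dvec i k') = - (if k' \<noteq> p then cnj (u k') / cnj (u p) else 0)
          + cnj (u k') / cnj (u p) * (1 - cnj (u p) * u p)" (is "_ = ?X") using S by simp
    moreover have e: "bvec p k * dvec p k' = u p * cnj (u k')" by (simp add: bvec_def dvec_def kp)
    ultimately have "(\<Sum>i<N. bvec i k * dvec i k') = u p * cnj (u k') + ?X" using split by simp
    then show ?thesis using cnj_u_p_nonzero kp by (cases "k' = p") (auto simp: field_simps)
  qed
qed

definition dtensor :: "nat list \<Rightarrow> nat list \<Rightarrow> complex" where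
  "dtensor c a = (\<Prod>t<length c. dvec (c!t) (a!t))"

definition btensor :: "nat list \<Rightarrow> tensor" where
  "btensor c a = (if a \<in> idx N (length c) then \<Prod>t<length c. bvec (c!t) (a!t) else 0)"

definition coord :: "nat list \<Rightarrow> tensor \<Rightarrow> complex" where
  "coord c \<zeta> = (\<Sum>a\<in>idx N (length c). dtensor c a * \<zeta> a)"

lemma coord_btensor: assumes c: "c \<in> idx N n" and c': "c' \<in> idx N n"
  shows "coord c' (btensor c) = (if c' = c then 1 else 0)"
proof -
  have l: "length c = n" "length c' = n" using c c' by (auto simp: idx_def)
  have "coord c' (btensor c) = (\<Sum>a\<in>idx N n. \<Prod>t<n. dvec (c'!t) (a!t) * bvec (c!t) (a!t))"
    unfolding coord_def dtensor_def btensor_def l by (intro sum.cong refl) (simp add: prod.distrib)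
  also have "\<dots> = (\<Prod>t<n. \<Sum>k<N. dvec (c'!t) k * bvec (c!t) k)" by (rule sum_idx_prod)
  also have "\<dots> = (\<Prod>t<n. if c'!t = c!t then 1 else 0)"
    by (intro prod.cong refl) (simp add: sum_dvec_bvec idx_nth_less[OF c] idx_nth_less[OF c'])
  also have "\<dots> = (if c' = c then 1 else 0)"
    unfolding prod_indicator_eq using l by (simp add: list_eq_iff_nth_eq)
  finally show ?thesis .
qed

lemma sum_btensor_dtensor: assumes a: "a \<in> idx N n" and a': "a' \<in> idx N n"
  shows "(\<Sum>c\<in>idx N n. btensor c a * dtensor c a') = (if a = a' then 1 else 0)"
proof -
  have l: "length a = n" "length a' = n" using a a' by (auto simp: idx_def)
  have "(\<Sum>c\<in>idx N n. btensor c a * dtensor c a') = (\<Sum>c\<in>idx N n. \<Prod>t<n. bvec (c!t) (a!t) * dvec (c!t) (a'!t))"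
    unfolding dtensor_def btensor_def by (intro sum.cong refl) (simp add: prod.distrib length_idx a)
  also have "\<dots> = (\<Prod>t<n. \<Sum>k<N. bvec k (a!t) * dvec k (a'!t))" by (rule sum_idx_prod)
  also have "\<dots> = (\<Prod>t<n. if a!t = a'!t then 1 else 0)"
    by (intro prod.cong refl) (simp add: sum_bvec_dvec idx_nth_less[OF a] idx_nth_less[OF a'])
  also have "\<dots> = (if a = a' then 1 else 0)"
    unfolding prod_indicator_eq using l by (simp add: list_eq_iff_nth_eq)
  finally show ?thesis .
qed

definition supported :: "nat \<Rightarrow> tensor \<Rightarrow> bool" where
  "supported n \<zeta> \<longleftrightarrow> (\<forall>a. a \<notin> idx N n \<longrightarrow> \<zeta> a = 0)"

lemma coord_expansion: assumes "supported n \<zeta>"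
  shows "\<zeta> a = (\<Sum>c\<in>idx N n. coord c \<zeta> * btensor c a)"
proof (cases "a \<in> idx N n")
  case True
  have "(\<Sum>c\<in>idx N n. coord c \<zeta> * btensor c a) = (\<Sum>c\<in>idx N n. \<Sum>a'\<in>idx N n. \<zeta> a' * (btensor c a * dtensor c a'))"
    unfolding coord_def sum_distrib_right by (intro sum.cong refl) (simp_all add: mult_ac length_idx)
  also have "\<dots> = (\<Sum>a'\<in>idx N n. \<zeta> a' * (\<Sum>c\<in>idx N n. btensor c a * dtensor c a'))"
    by (subst sum.swap) (simp add: sum_distrib_left)
  also have "\<dots> = (\<Sum>a'\<in>idx N n. \<zeta> a' * (if a = a' then 1 else 0))"
    by (intro sum.cong refl) (simp add: sum_btensor_dtensor True)
  also have "\<dots> = \<zeta> a" using True by (simp add: if_distrib cong: if_cong)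
  finally show ?thesis by simp
next
  case False
  then have "\<And>c. c \<in> idx N n \<Longrightarrow> btensor c a = 0" by (simp add: btensor_def length_idx)
  then show ?thesis using assms False by (simp add: supported_def)
qed

lemma coord_ext:
  assumes "supported n X" "supported n Y" "\<And>e. e \<in> idx N n \<Longrightarrow> coord e X = coord e Y"
  shows "X = Y"
proof
  fix a show "X a = Y a" using coord_expansion[OF assms(1), of a] coord_expansion[OF assms(2), of a] assms(3) by simp
qed

lemma sym_tensor_supported: "sym_tensor N n \<zeta> \<Longrightarrow> supported n \<zeta>"
  by (simp add: sym_tensor_def supported_def)

lemma sym_tensor_coord_nonzero: assumes "sym_tensor N n \<zeta>" "\<zeta> \<noteq> 0" shows "\<exists>e\<in>idx N n. coord e \<zeta> \<noteq> 0"
proof (rule ccontr)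
  assume all0: "\<not> (\<exists>e\<in>idx N n. coord e \<zeta> \<noteq> 0)"
  have "\<zeta> = (\<lambda>_. 0)"
  proof (rule coord_ext)
    show "supported n \<zeta>" by (rule sym_tensor_supported[OF assms(1)])
    show "supported n (\<lambda>_. 0)" by (simp add: supported_def)
    fix e assume "e \<in> idx N n"
    then show "coord e \<zeta> = coord e (\<lambda>_. 0)" using all0 by (simp add: coord_def)
  qed
  then show False using assms(2) by (simp add: zero_fun_def)
qed

lemma dtensor_permute_list: assumes s: "\<sigma> \<in> perms n" and "length c = n" "length a = n"
  shows "dtensor (permute_list \<sigma> c) (permute_list \<sigma> a) = dtensor c a"
proof -
  have sp: "\<sigma> permutes {..<n}" using s by (simp add: perms_def)
  have "dtensor (permute_list \<sigma> c) (permute_list \<sigma> a) = (\<Prod>t<n. dvec (c!(\<sigma> t)) (a!(\<sigma> t)))"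
    unfolding dtensor_def using assms sp by (intro prod.cong) (auto simp: permute_list_nth)
  also have "\<dots> = (\<Prod>t<n. dvec (c!t) (a!t))"
    using prod.permute[OF sp, of "\<lambda>t. dvec (c!t) (a!t)"] by (simp add: comp_def)
  finally show ?thesis using assms by (simp add: dtensor_def)
qed

lemma sum_dtensor_permute_list: assumes s: "\<sigma> \<in> perms n" and d: "length d = n"
  shows "(\<Sum>a\<in>idx N n. dtensor d (permute_list \<sigma> a) * \<zeta> (permute_list \<sigma> a)) = coord d \<zeta>"
  unfolding coord_def d using sum.reindex_bij_betw[OF bij_betw_permute_list[OF s], of "\<lambda>a. dtensor d a * \<zeta> a"] .

lemma coord_permute_list: assumes s: "\<sigma> \<in> perms n" and c: "c \<in> idx N n"
  shows "(\<Sum>a\<in>idx N n. dtensor c a * \<zeta> (permute_list \<sigma> a)) = coord (permute_list \<sigma> c) \<zeta>"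
proof -
  have "(\<Sum>a\<in>idx N n. dtensor c a * \<zeta> (permute_list \<sigma> a))
      = (\<Sum>a\<in>idx N n. dtensor (permute_list \<sigma> c) (permute_list \<sigma> a) * \<zeta> (permute_list \<sigma> a))"
  proof (intro sum.cong refl)
    fix a assume "a \<in> idx N n"
    then show "dtensor c a * \<zeta> (permute_list \<sigma> a) = dtensor (permute_list \<sigma> c) (permute_list \<sigma> a) * \<zeta> (permute_list \<sigma> a)"
      using dtensor_permute_list[OF s length_idx[OF c] length_idx] by simp
  qed
  also have "\<dots> = coord (permute_list \<sigma> c) \<zeta>" by (rule sum_dtensor_permute_list[OF s]) (simp add: length_idx[OF c])
  finally show ?thesis .
qed

lemma coord_permute_list_sym_tensor: assumes "sym_tensor N n \<zeta>" "\<sigma> \<in> perms n" "c \<in> idx N n"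
  shows "coord (permute_list \<sigma> c) \<zeta> = coord c \<zeta>"
proof -
  have "coord c \<zeta> = (\<Sum>a\<in>idx N n. dtensor c a * \<zeta> (permute_list \<sigma> a))"
    unfolding coord_def using assms by (intro sum.cong) (auto simp: sym_tensor_def length_idx)
  then show ?thesis using coord_permute_list[OF assms(2,3)] by simp
qed

lemma coord_sym_proj: assumes c: "c \<in> idx N n"
  shows "coord c (app N n (sym_proj N n) \<zeta>) = (\<Sum>\<sigma>\<in>perms n. coord (permute_list \<sigma> c) \<zeta>) / of_nat (fact n)"
proof -
  have "coord c (app N n (sym_proj N n) \<zeta>) = (\<Sum>a\<in>idx N n. dtensor c a * ((\<Sum>\<sigma>\<in>perms n. \<zeta> (permute_list \<sigma> a)) / of_nat (fact n)))"
    unfolding coord_def using c by (intro sum.cong) (auto simp: app_sym_proj length_idx)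
  also have "\<dots> = (\<Sum>\<sigma>\<in>perms n. \<Sum>a\<in>idx N n. dtensor c a * \<zeta> (permute_list \<sigma> a)) / of_nat (fact n)"
    by (simp add: sum_distrib_left sum_divide_distrib sum.swap[of _ "idx N n"])
  also have "\<dots> = (\<Sum>\<sigma>\<in>perms n. coord (permute_list \<sigma> c) \<zeta>) / of_nat (fact n)"
    using coord_permute_list[OF _ c] by simp
  finally show ?thesis .
qed

lemma bvec_p: "bvec p k = u k" by (simp add: bvec_def)

lemma dvec_p: "dvec p k = cnj (u k)" by (simp add: dvec_def)

lemma sum_dvec_u: "i < N \<Longrightarrow> (\<Sum>k<N. dvec i k * u k) = (if i = p then 1 else 0)"
  using sum_dvec_bvec[of i p] pN by (simp add: bvec_p)

lemma id_tensor_proj_pow_eq_prod: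
  assumes la: "length a = n" and lb: "length b = n" and ln: "l \<le> n"
  shows "id_tensor l (proj_pow u) a b
    = (\<Prod>t<n. if t < l then (if a!t = b!t then 1 else 0) else u (a!t)) * (\<Prod>t\<in>{l..<n}. dvec p (b!t))"
proof -
  have "(\<Prod>t<n. (if t < l then (if a!t = b!t then 1 else 0) else u (a!t)))
      = (\<Prod>t<l. (if a!t = b!t then 1 else 0)) * (\<Prod>t\<in>{l..<n}. u (a!t))"
    using prod_lessThan_split[OF ln, of "\<lambda>t. (if t < l then (if a!t = b!t then 1 else 0) else u (a!t))"] by simp
  also have "\<dots> = (if take l a = take l b then prod_list (map u (drop l a)) else 0)"
    using prod_indicator_eq[where n=l and f="\<lambda>t. a!t" and g="\<lambda>t. b!t"] take_eq_take_iff[OF la lb ln]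
      prod_list_map_drop[OF la ln, of u] by auto
  finally show ?thesis
    by (simp add: id_tensor_def proj_pow_def prod_list_map_drop[OF lb ln] dvec_p)
qed

lemma sum_dtensor_id_tensor_proj_pow: assumes d: "d \<in> idx N n" and b: "b \<in> idx N n" and ln: "l \<le> n"
  shows "(\<Sum>a\<in>idx N n. dtensor d a * id_tensor l (proj_pow u) a b)
       = (if \<forall>t\<in>{l..<n}. d!t = p then dtensor d b else 0)"
proof -
  define C where "C = (\<Prod>t\<in>{l..<n}. dvec p (b!t))"
  define g where "g t k = dvec (d!t) k * (if t < l then (if k = b!t then 1 else 0) else u k)" for t k
  have lb: "length b = n" and ld: "length d = n" using b d by (auto simp: length_idx)
  have "dtensor d a * id_tensor l (proj_pow u) a b = (\<Prod>t<n. g t (a!t)) * C" if "a \<in> idx N n" for a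
    using id_tensor_proj_pow_eq_prod[OF length_idx[OF that] lb ln]
    unfolding dtensor_def ld g_def C_def by (simp add: prod.distrib mult.assoc)
  then have "(\<Sum>a\<in>idx N n. dtensor d a * id_tensor l (proj_pow u) a b)
      = (\<Sum>a\<in>idx N n. \<Prod>t<n. g t (a!t)) * C"
    by (simp add: sum_distrib_right)
  also have "\<dots> = (\<Prod>t<n. \<Sum>k<N. g t k) * C" by (simp only: sum_idx_prod)
  also have "(\<Prod>t<n. \<Sum>k<N. g t k) = (\<Prod>t<n. if t < l then dvec (d!t) (b!t) else (if d!t = p then 1 else 0))"
  proof (rule prod.cong[OF refl])
    fix t assume "t \<in> {..<n}"
    then show "(\<Sum>k<N. g t k) = (if t < l then dvec (d!t) (b!t) else (if d!t = p then 1 else 0))"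
      using sum_lessThan_delta'[OF idx_nth_less[OF b]] sum_dvec_u[OF idx_nth_less[OF d]] by (simp add: g_def)
  qed
  also have "\<dots> * C = (\<Prod>t<l. dvec (d!t) (b!t)) * ((\<Prod>t\<in>{l..<n}. if d!t = p then 1 else 0) * C)"
    by (subst prod_lessThan_split[OF ln]) simp
  also have "(\<Prod>t\<in>{l..<n}. if d!t = p then 1 else 0) * C = (\<Prod>t\<in>{l..<n}. if d!t = p then dvec (d!t) (b!t) else 0)"
    unfolding C_def prod.distrib[symmetric] by (intro prod.cong refl) auto
  also have "\<dots> = (if \<forall>t\<in>{l..<n}. d!t = p then (\<Prod>t\<in>{l..<n}. dvec (d!t) (b!t)) else 0)"
    by auto
  also have "(\<Prod>t<l. dvec (d!t) (b!t)) * \<dots> = (if \<forall>t\<in>{l..<n}. d!t = p then dtensor d b else 0)"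
    unfolding dtensor_def ld using prod_lessThan_split[OF ln, of "\<lambda>t. dvec (d!t) (b!t)"] by simp
  finally show ?thesis .
qed

lemma coord_app:
  assumes d: "d \<in> idx N n"
  shows "coord d (app N n A Y) = (\<Sum>b\<in>idx N n. (\<Sum>a\<in>idx N n. dtensor d a * A a b) * Y b)"
  unfolding coord_def app_def length_idx[OF d] sum_distrib_left sum_distrib_right
  by (subst sum.swap) (simp add: mult.assoc)

lemma coord_id_tensor_proj_pow: assumes d: "d \<in> idx N n" and ln: "l \<le> n"
  shows "coord d (app N n (id_tensor l (proj_pow u)) Y) = (if \<forall>t\<in>{l..<n}. d!t = p then 1 else 0) * coord d Y"
proof -
  have "coord d (app N n (id_tensor l (proj_pow u)) Y)
      = (\<Sum>b\<in>idx N n. (if \<forall>t\<in>{l..<n}. d!t = p then 1 else 0) * (dtensor d b * Y b))"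
    unfolding coord_app[OF d] by (intro sum.cong refl) (simp add: sum_dtensor_id_tensor_proj_pow[OF d _ ln])
  then show ?thesis unfolding coord_def length_idx[OF d] by (simp add: sum_distrib_left)
qed

lemma coord_scale: "coord d (\<lambda>a. s * X a) = s * coord d X"
  by (simp add: coord_def sum_distrib_left mult_ac)

lemma coord_sum: "coord d (\<lambda>a. \<Sum>i\<in>I. c i * X i a) = (\<Sum>i\<in>I. c i * coord d (X i))"
  unfolding coord_def by (simp add: sum_distrib_left sum.swap[of _ I] mult_ac)

lemma coord_sum_scale: assumes "finite B"
  shows "coord e (\<Sum>w\<in>B. tensor_scale (c w) w) = (\<Sum>w\<in>B. c w * coord e w)"
  unfolding coord_def sum_fun_apply tensor_scale_def
  by (simp add: sum_distrib_left sum.swap[of _ B] mult_ac)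

lemma dtensor_Cons: "dtensor (e0 # e') (k # c) = dvec e0 k * dtensor e' c"
  unfolding dtensor_def by (simp add: prod.lessThan_Suc_shift del: prod.lessThan_Suc)

lemma coord_Cons: "coord (e0 # e') X = (\<Sum>k<N. \<Sum>c\<in>idx N (length e'). dvec e0 k * dtensor e' c * X (k # c))"
  unfolding coord_def by (simp add: sum_idx_Suc dtensor_Cons)

lemma coord_u_tensor_annihilation: assumes e: "e \<in> idx N (Suc m)" and z: "sym_tensor N (Suc m) \<zeta>"
  shows "coord e (\<lambda>b. u (hd b) * app N (Suc m) (annihilation N m u) \<zeta> (tl b))
     = (if e!0 = p then 1 else 0) * of_real (sqrt (real (Suc m))) * coord e \<zeta>"
proof -
  obtain e0 e' where ee: "e = e0 # e'" using e by (cases e) (auto simp: idx_def)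
  have e0: "e0 < N" and le': "length e' = m" using e ee by (auto simp: idx_def)
  define s where "s = (of_real (sqrt (real (Suc m))) :: complex)"
  have "coord e (\<lambda>b. u (hd b) * app N (Suc m) (annihilation N m u) \<zeta> (tl b))
     = (\<Sum>k<N. \<Sum>c\<in>idx N m. dvec e0 k * u k * (dtensor e' c * (s * (\<Sum>i<N. cnj (u i) * \<zeta> (i # c)))))"
    unfolding ee coord_Cons le' by (simp add: app_annihilation_sym_tensor[OF z] s_def mult_ac)
  also have "\<dots> = (\<Sum>k<N. dvec e0 k * u k) * (\<Sum>c\<in>idx N m. dtensor e' c * (s * (\<Sum>i<N. cnj (u i) * \<zeta> (i # c))))"
    by (rule sum_product[symmetric])
  also have "\<dots> = (if e0 = p then 1 else 0) * (s * (\<Sum>i<N. \<Sum>c\<in>idx N m. dvec p i * dtensor e' c * \<zeta> (i # c)))"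
  proof -
    have "(\<Sum>c\<in>idx N m. dtensor e' c * (s * (\<Sum>i<N. cnj (u i) * \<zeta> (i # c))))
        = s * (\<Sum>i<N. \<Sum>c\<in>idx N m. dvec p i * dtensor e' c * \<zeta> (i # c))"
      by (subst sum.swap) (simp add: sum_distrib_left dvec_p mult_ac)
    then show ?thesis using sum_dvec_u[OF e0] by simp
  qed
  also have "\<dots> = (if e!0 = p then 1 else 0) * s * coord e \<zeta>"
    unfolding ee coord_Cons le' by auto
  finally show ?thesis by (simp add: s_def)
qed

definition occ :: "nat list \<Rightarrow> nat" where
  "occ d = card {t. t < length d \<and> d!t = p}"

lemma occ_eq_count: "occ d = count (mset d) p"
proof -
  have "card {t. t < length d \<and> d!t = p} = card {t. t < length d \<and> p = d!t}"
    by (rule arg_cong[where f=card]) auto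
  then show ?thesis by (simp add: occ_def count_mset count_list_eq_length_filter length_filter_conv_card)
qed

lemma occ_permute_list: "\<sigma> \<in> perms n \<Longrightarrow> c \<in> idx N n \<Longrightarrow> occ (permute_list \<sigma> c) = occ c"
  by (simp add: occ_eq_count perms_def length_idx)

lemma occ_le: "e \<in> idx N n \<Longrightarrow> occ e \<le> n"
  unfolding occ_eq_count by (metis count_le_size length_idx size_mset)

lemma occ_image: assumes "2 \<le> N" shows "occ ` idx N n = {..n}"
proof (intro equalityI subsetI)
  fix m assume "m \<in> occ ` idx N n" then show "m \<in> {..n}" using occ_le by auto
next
  fix m assume m: "m \<in> {..n}"
  define q where "q = (if p = 0 then 1 else (0::nat))"
  have q: "q \<noteq> p" "q < N" using assms by (auto simp: q_def)
  have "replicate m p @ replicate (n - m) q \<in> idx N n" using m q pN by (auto simp: idx_def)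
  moreover have "occ (replicate m p @ replicate (n - m) q) = m" using q(1) by (simp add: occ_eq_count)
  ultimately show "m \<in> occ ` idx N n" by (metis image_eqI)
qed

text \<open>The factor \<open>sqrt (m + 1)\<close> occurs twice, and \<open>occ d * m!\<close> permutations put a copy of \<open>p\<close>
  first; together they cancel the \<open>1/(m + 1)!\<close> of the symmetrizer.\<close>
lemma coord_number_op_Suc:
  assumes z: "sym_tensor N (Suc m) \<zeta>" and d: "d \<in> idx N (Suc m)"
  shows "coord d (app N (Suc m) (number_op N (Suc m) u) \<zeta>) = of_nat (occ d) * coord d \<zeta>"
proof -
  define s where "s = (of_real (sqrt (real (Suc m))) :: complex)"
  define X where "X = (\<lambda>b. u (hd b) * app N (Suc m) (annihilation N m u) \<zeta> (tl b))"
  have "sqrt (real (Suc m)) * sqrt (real (Suc m)) = real (Suc m)" by simp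
  then have ss: "s * s = of_nat (Suc m)" unfolding s_def of_real_mult[symmetric] by simp
  have coord_X: "coord (permute_list \<sigma> d) X = (if d!(\<sigma> 0) = p then s else 0) * coord d \<zeta>"
    if \<sigma>: "\<sigma> \<in> perms (Suc m)" for \<sigma>
  proof -
    have "(permute_list \<sigma> d)!0 = d!(\<sigma> 0)"
      using permute_list_nth[of \<sigma> d 0] \<sigma> d by (simp add: perms_def length_idx)
    then show ?thesis
      using coord_u_tensor_annihilation[OF permute_list_idx[OF \<sigma> d] z] coord_permute_list_sym_tensor[OF z \<sigma> d]
      by (simp add: X_def s_def)
  qed
  have "coord d (app N (Suc m) (number_op N (Suc m) u) \<zeta>)
      = s * ((\<Sum>\<sigma>\<in>perms (Suc m). coord (permute_list \<sigma> d) X) / of_nat (fact (Suc m)))"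
    unfolding app_number_op coord_scale coord_sym_proj[OF d] s_def X_def ..
  also have "(\<Sum>\<sigma>\<in>perms (Suc m). coord (permute_list \<sigma> d) X)
      = (\<Sum>\<sigma>\<in>perms (Suc m). if d!(\<sigma> 0) = p then s else 0) * coord d \<zeta>"
    by (simp add: coord_X sum_distrib_right)
  also have "(\<Sum>\<sigma>\<in>perms (Suc m). if d!(\<sigma> 0) = p then s else 0) = of_nat (card {\<sigma>\<in>perms (Suc m). d!(\<sigma> 0) = p}) * s"
    by (rule sum_indicator_card) simp
  also have "card {\<sigma>\<in>perms (Suc m). d!(\<sigma> 0) = p} = occ d * fact m"
    using card_perms_head_const[OF length_idx[OF d]] by (simp add: occ_def length_idx[OF d])
  also have "s * (of_nat (occ d * fact m) * s * coord d \<zeta> / of_nat (fact (Suc m))) = of_nat (occ d) * coord d \<zeta>"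
  proof -
    have "(fact (Suc m) :: complex) = s * s * fact m" by (simp only: fact_Suc ss)
    moreover have "s \<noteq> 0" by (simp add: s_def)
    ultimately show ?thesis by (simp add: field_simps)
  qed
  finally show ?thesis .
qed

lemma coord_number_op: assumes z: "sym_tensor N n \<zeta>" and d: "d \<in> idx N n"
  shows "coord d (app N n (number_op N n u) \<zeta>) = of_nat (occ d) * coord d \<zeta>"
proof (cases n)
  case 0
  then show ?thesis using d by (simp add: app_def coord_def occ_def length_idx)
next
  case (Suc m)
  then show ?thesis using coord_number_op_Suc z d by simp
qed

text \<open>The permutations bringing copies of \<open>p\<close> into all of the last \<open>j\<close> slots number
  \<open>l! m!/(m - j)!\<close>, and the normalisation \<open>(j + l)!/j!\<close> of \<open>T_op\<close> cancels the \<open>1/(j + l)!\<close> of the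
  symmetrizer.\<close>
lemma coord_T_op: assumes z: "sym_tensor N n \<zeta>" and d: "d \<in> idx N n" and nj: "n = j + l"
  shows "coord d (app N n (T_op N j l (proj_pow u)) \<zeta>) = of_real (f_ell j l (occ d)) / of_nat (fact j) * coord d \<zeta>"
proof -
  define s where "s = (of_nat (fact n) / of_nat (fact j) :: complex)"
  define G where "G = id_tensor l (proj_pow u)"
  have ln: "l \<le> n" using nj by simp
  have "app N n (T_op N j l (proj_pow u)) \<zeta>
      = (\<lambda>a. s * app N n (mmul N n (mmul N n (sym_proj N n) G) (sym_proj N n)) \<zeta> a)"
    unfolding T_op_def nj s_def G_def by (rule app_scale)
  also have "app N n (mmul N n (mmul N n (sym_proj N n) G) (sym_proj N n)) \<zeta> = app N n (sym_proj N n) (app N n G \<zeta>)"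
    by (simp add: app_mmul sym_proj_sym_tensor[OF z])
  finally have T: "app N n (T_op N j l (proj_pow u)) \<zeta> = (\<lambda>a. s * app N n (sym_proj N n) (app N n G \<zeta>) a)" .
  have coord_G: "coord (permute_list \<sigma> d) (app N n G \<zeta>) = (if \<forall>t\<in>{l..<n}. d!(\<sigma> t) = p then 1 else 0) * coord d \<zeta>"
    if \<sigma>: "\<sigma> \<in> perms n" for \<sigma>
  proof -
    have "(\<forall>t\<in>{l..<n}. (permute_list \<sigma> d)!t = p) \<longleftrightarrow> (\<forall>t\<in>{l..<n}. d!(\<sigma> t) = p)"
      using permute_list_nth[of \<sigma> d] \<sigma> length_idx[OF d] by (auto simp: perms_def)
    then show ?thesis
      unfolding G_def coord_id_tensor_proj_pow[OF permute_list_idx[OF \<sigma> d] ln] coord_permute_list_sym_tensor[OF z \<sigma> d]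
      by simp
  qed
  have "coord d (app N n (T_op N j l (proj_pow u)) \<zeta>)
      = s * ((\<Sum>\<sigma>\<in>perms n. coord (permute_list \<sigma> d) (app N n G \<zeta>)) / of_nat (fact n))"
    unfolding T coord_scale coord_sym_proj[OF d] ..
  also have "(\<Sum>\<sigma>\<in>perms n. coord (permute_list \<sigma> d) (app N n G \<zeta>))
      = of_nat (card {\<sigma>\<in>perms n. \<forall>t\<in>{l..<n}. d!(\<sigma> t) = p}) * coord d \<zeta>"
    using sum_indicator_card[of "perms n" "\<lambda>\<sigma>. \<forall>t\<in>{l..<n}. d!(\<sigma> t) = p" 1]
    by (simp add: coord_G sum_distrib_right[symmetric])
  also have "card {\<sigma>\<in>perms n. \<forall>t\<in>{l..<n}. d!(\<sigma> t) = p}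
      = (if j \<le> occ d then fact l * \<Prod>{occ d - j + 1 .. occ d} else 0)"
    using card_perms_suffix_const[OF length_idx[OF d] ln, of p] nj by (simp add: occ_def length_idx[OF d])
  also have "(of_nat (if j \<le> occ d then fact l * \<Prod>{occ d - j + 1 .. occ d} else 0) :: complex)
      = of_real (f_ell j l (occ d))"
    using fact_div_fact_eq_prod[of j "occ d" l] by (auto simp: f_ell_def)
  finally show ?thesis by (simp add: s_def)
qed

section \<open>Operators diagonal in the symmetrized basis\<close>

definition sbasis :: "nat list \<Rightarrow> tensor" where
  "sbasis d = app N (length d) (sym_proj N (length d)) (btensor d)"

lemma sym_tensor_sbasis: "d \<in> idx N n \<Longrightarrow> sym_tensor N n (sbasis d)"
  unfolding sbasis_def using sym_tensor_sym_proj length_idx by blast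

lemma coord_sbasis: assumes d: "d \<in> idx N n" and e: "e \<in> idx N n"
  shows "coord e (sbasis d) = of_nat (card {\<sigma>\<in>perms n. permute_list \<sigma> e = d}) / of_nat (fact n)"
proof -
  have "coord e (sbasis d) = (\<Sum>\<sigma>\<in>perms n. coord (permute_list \<sigma> e) (btensor d)) / of_nat (fact n)"
    unfolding sbasis_def length_idx[OF d] by (rule coord_sym_proj[OF e])
  also have "\<dots> = (\<Sum>\<sigma>\<in>perms n. if permute_list \<sigma> e = d then 1 else 0) / of_nat (fact n)"
    using coord_btensor[OF d permute_list_idx[OF _ e]] by simp
  finally show ?thesis using sum_indicator_card[of "perms n" _ 1] by simp
qed

lemma coord_sbasis_self: assumes d: "d \<in> idx N n" shows "coord d (sbasis d) \<noteq> 0"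
proof -
  have "id \<in> {\<sigma>\<in>perms n. permute_list \<sigma> d = d}" by (simp add: perms_def permutes_id)
  then have "card {\<sigma>\<in>perms n. permute_list \<sigma> d = d} \<noteq> 0" by (auto simp: card_eq_0_iff)
  then show ?thesis using coord_sbasis[OF d d] by simp
qed

lemma mset_eq_if_coord_sbasis_nonzero:
  assumes d: "d \<in> idx N n" and e: "e \<in> idx N n" and nz: "coord e (sbasis d) \<noteq> 0"
  shows "mset e = mset d"
proof -
  have "{\<sigma>\<in>perms n. permute_list \<sigma> e = d} \<noteq> {}" using nz coord_sbasis[OF d e] by (metis card.empty of_nat_0 div_0)
  then obtain \<sigma> where "\<sigma> \<in> perms n" "permute_list \<sigma> e = d" by blast
  then show ?thesis using length_idx[OF e] by (auto simp: perms_def)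
qed

lemma sbasis_nonzero: assumes "d \<in> idx N n" shows "sbasis d \<noteq> 0"
proof
  assume "sbasis d = 0"
  then have "coord d (sbasis d) = 0" by (simp add: coord_def)
  then show False using coord_sbasis_self[OF assms] by simp
qed

lemma sbasis_mset_eq:
  assumes c: "c \<in> idx N n" and c': "c' \<in> idx N n" and eq: "mset c = mset c'"
  shows "sbasis c = sbasis c'"
proof (rule coord_ext)
  show "supported n (sbasis c)" "supported n (sbasis c')"
    using sym_tensor_supported sym_tensor_sbasis c c' by blast+
  fix e assume e: "e \<in> idx N n"
  show "coord e (sbasis c) = coord e (sbasis c')"
    unfolding coord_sbasis[OF c e] coord_sbasis[OF c' e]
    using card_perms_permute_list_eq_mset[OF length_idx[OF c] length_idx[OF e] eq] by simp
qed

lemma sym_tensor_eq_sum_sbasis: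
  assumes z: "sym_tensor N n \<psi>" shows "\<psi> = (\<Sum>c\<in>idx N n. tensor_scale (coord c \<psi>) (sbasis c))"
proof -
  have "(\<lambda>a. \<Sum>c\<in>idx N n. coord c \<psi> * btensor c a) = \<psi>"
    using coord_expansion[OF sym_tensor_supported[OF z]] by (simp add: fun_eq_iff)
  then have "\<psi> = app N n (sym_proj N n) (\<lambda>a. \<Sum>c\<in>idx N n. coord c \<psi> * btensor c a)"
    using sym_proj_sym_tensor[OF z] by simp
  also have "\<dots> = (\<lambda>a. \<Sum>c\<in>idx N n. coord c \<psi> * sbasis c a)"
    unfolding app_sum by (intro ext sum.cong refl) (simp add: sbasis_def length_idx)
  finally show ?thesis by (simp add: fun_eq_iff sum_fun_apply tensor_scale_def)
qed

definition occ_diagonal :: "nat \<Rightarrow> mop \<Rightarrow> (nat \<Rightarrow> complex) \<Rightarrow> bool" where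
  "occ_diagonal n A g \<longleftrightarrow> (\<forall>\<zeta>. sym_tensor N n \<zeta> \<longrightarrow> sym_tensor N n (app N n A \<zeta>)
     \<and> (\<forall>e\<in>idx N n. coord e (app N n A \<zeta>) = g (occ e) * coord e \<zeta>))"

lemma occ_diagonalI:
  assumes "\<And>\<zeta>. sym_tensor N n \<zeta> \<Longrightarrow> sym_tensor N n (app N n A \<zeta>)"
    and "\<And>\<zeta> e. sym_tensor N n \<zeta> \<Longrightarrow> e \<in> idx N n \<Longrightarrow> coord e (app N n A \<zeta>) = g (occ e) * coord e \<zeta>"
  shows "occ_diagonal n A g"
  using assms unfolding occ_diagonal_def by blast

lemma occ_diagonalD:
  assumes "occ_diagonal n A g" "sym_tensor N n \<zeta>"
  shows "sym_tensor N n (app N n A \<zeta>)"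
    and "e \<in> idx N n \<Longrightarrow> coord e (app N n A \<zeta>) = g (occ e) * coord e \<zeta>"
  using assms unfolding occ_diagonal_def by blast+

lemma occ_diagonal_number_op: "occ_diagonal n (number_op N n u) of_nat"
  by (intro occ_diagonalI sym_tensor_number_op coord_number_op)

lemma occ_diagonal_T_op: "occ_diagonal (j + l) (T_op N j l (proj_pow u)) (\<lambda>m. of_real (f_ell j l m) / of_nat (fact j))"
  by (intro occ_diagonalI sym_tensor_T_op coord_T_op) simp_all

lemma occ_diagonal_scale: "occ_diagonal n A g \<Longrightarrow> occ_diagonal n (\<lambda>a b. c * A a b) (\<lambda>m. c * g m)"
  unfolding occ_diagonal_def app_scale by (simp add: sym_tensor_scale coord_scale)

lemma occ_diagonal_op_pow: "occ_diagonal n A g \<Longrightarrow> occ_diagonal n (op_pow N n A i) (\<lambda>m. g m ^ i)"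
proof (induction i)
  case 0
  show ?case by (rule occ_diagonalI) (simp_all add: app_id_op sym_tensor_def)
next
  case (Suc i)
  have pow_Suc: "app N n (op_pow N n A (Suc i)) \<zeta> = app N n A (app N n (op_pow N n A i) \<zeta>)" for \<zeta>
    by (simp add: app_mmul)
  show ?case
  proof (rule occ_diagonalI)
    fix \<zeta> assume "sym_tensor N n \<zeta>"
    then have "sym_tensor N n (app N n (op_pow N n A i) \<zeta>)" by (rule occ_diagonalD(1)[OF Suc.IH[OF Suc.prems]])
    then show "sym_tensor N n (app N n (op_pow N n A (Suc i)) \<zeta>)"
      unfolding pow_Suc by (rule occ_diagonalD(1)[OF Suc.prems])
  next
    fix \<zeta> e assume z: "sym_tensor N n \<zeta>" and e: "e \<in> idx N n"
    have "sym_tensor N n (app N n (op_pow N n A i) \<zeta>)" by (rule occ_diagonalD(1)[OF Suc.IH[OF Suc.prems] z])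
    then show "coord e (app N n (op_pow N n A (Suc i)) \<zeta>) = g (occ e) ^ Suc i * coord e \<zeta>"
      unfolding pow_Suc using occ_diagonalD(2)[OF Suc.prems _ e] occ_diagonalD(2)[OF Suc.IH[OF Suc.prems] z e]
      by simp
  qed
qed

lemma coord_poly_op:
  assumes A: "occ_diagonal n A g" and z: "sym_tensor N n \<zeta>" and e: "e \<in> idx N n"
  shows "coord e (app N n (poly_op N n L A) \<zeta>) = poly L (g (occ e)) * coord e \<zeta>"
  unfolding app_poly_op coord_sum poly_altdef occ_diagonalD(2)[OF occ_diagonal_op_pow[OF A] z e]
  by (simp add: sum_distrib_left mult_ac)

lemma occ_diagonal_eigenvalue:
  assumes A: "occ_diagonal n A g" and z: "sym_tensor N n \<psi>" and eig: "app N n A \<psi> = (\<lambda>a. c * \<psi> a)"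
    and e: "e \<in> idx N n" and nz: "coord e \<psi> \<noteq> 0"
  shows "c = g (occ e)"
  using occ_diagonalD(2)[OF A z e] nz unfolding eig coord_scale by simp

lemma occ_diagonal_sbasis:
  assumes A: "occ_diagonal n A g" and d: "d \<in> idx N n"
  shows "app N n A (sbasis d) = (\<lambda>a. g (occ d) * sbasis d a)"
proof (rule coord_ext)
  have z: "sym_tensor N n (sbasis d)" by (rule sym_tensor_sbasis[OF d])
  show "supported n (app N n A (sbasis d))" by (rule sym_tensor_supported[OF occ_diagonalD(1)[OF A z]])
  show "supported n (\<lambda>a. g (occ d) * sbasis d a)" by (rule sym_tensor_supported[OF sym_tensor_scale[OF z]])
  fix e assume e: "e \<in> idx N n"
  show "coord e (app N n A (sbasis d)) = coord e (\<lambda>a. g (occ d) * sbasis d a)"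
  proof (cases "coord e (sbasis d) = 0")
    case True then show ?thesis by (simp add: occ_diagonalD(2)[OF A z e] coord_scale)
  next
    case False
    then have "occ e = occ d" using mset_eq_if_coord_sbasis_nonzero[OF d e] by (simp add: occ_eq_count)
    then show ?thesis by (simp add: occ_diagonalD(2)[OF A z e] coord_scale)
  qed
qed

lemma specH_occ_diagonal:
  assumes A: "occ_diagonal n A g" shows "specH N n A = (\<lambda>d. g (occ d)) ` idx N n"
proof (intro equalityI subsetI)
  fix c assume "c \<in> specH N n A"
  then obtain \<psi> where \<psi>: "\<psi> \<in> Hsym N n" "\<psi> \<noteq> 0" "app N n A \<psi> = (\<lambda>a. c * \<psi> a)"
    by (auto simp: specH_def)
  have z: "sym_tensor N n \<psi>" using \<psi>(1) by (simp add: Hsym_iff_sym_tensor)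
  obtain e where "e \<in> idx N n" "coord e \<psi> \<noteq> 0" using sym_tensor_coord_nonzero[OF z \<psi>(2)] by blast
  then show "c \<in> (\<lambda>d. g (occ d)) ` idx N n" using occ_diagonal_eigenvalue[OF A z \<psi>(3)] by blast
next
  fix c assume "c \<in> (\<lambda>d. g (occ d)) ` idx N n"
  then obtain d where d: "d \<in> idx N n" "c = g (occ d)" by blast
  have "sbasis d \<in> Hsym N n" using sym_tensor_sbasis[OF d(1)] by (simp add: Hsym_iff_sym_tensor)
  then show "c \<in> specH N n A"
    unfolding specH_def using occ_diagonal_sbasis[OF A d(1)] sbasis_nonzero[OF d(1)] d(2) by blast
qed

text \<open>\<open>fcalc\<close> applies the Lagrange interpolation polynomial of \<open>f\<close> on the (finite) spectrum,
  which takes the value \<open>f (g m)\<close> at every eigenvalue \<open>g m\<close>.\<close>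
lemma occ_diagonal_fcalc:
  assumes A: "occ_diagonal n A g" shows "occ_diagonal n (fcalc N n f A) (\<lambda>m. f (g m))"
proof -
  define Sp where "Sp = specH N n A"
  define L where "L = (\<Sum>c\<in>Sp. smult (f c) (\<Prod>\<mu>\<in>Sp - {c}. smult (1 / (c - \<mu>)) [:- \<mu>, 1:]))"
  have fc: "app N n (fcalc N n f A) \<zeta> = app N n (sym_proj N n) (app N n (poly_op N n L A) \<zeta>)" for \<zeta>
    unfolding fcalc_def L_def Sp_def by (rule app_mmul)
  have Sp: "finite Sp" "\<And>e. e \<in> idx N n \<Longrightarrow> g (occ e) \<in> Sp"
    unfolding Sp_def specH_occ_diagonal[OF A] by auto
  show ?thesis
  proof (rule occ_diagonalI)
    fix \<zeta> show "sym_tensor N n (app N n (fcalc N n f A) \<zeta>)" unfolding fc by (rule sym_tensor_sym_proj)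
  next
    fix \<zeta> e assume z: "sym_tensor N n \<zeta>" and e: "e \<in> idx N n"
    have "coord e (app N n (fcalc N n f A) \<zeta>) = (\<Sum>\<sigma>\<in>perms n. poly L (g (occ e)) * coord e \<zeta>) / of_nat (fact n)"
      unfolding fc coord_sym_proj[OF e]
      using coord_poly_op[OF A z permute_list_idx[OF _ e]] occ_permute_list[OF _ e]
        coord_permute_list_sym_tensor[OF z _ e]
      by simp
    also have "\<dots> = poly L (g (occ e)) * coord e \<zeta>" by (simp add: card_perms)
    also have "poly L (g (occ e)) = f (g (occ e))"
      unfolding L_def by (rule poly_lagrange_interpolation[OF Sp(1) Sp(2)[OF e]])
    finally show "coord e (app N n (fcalc N n f A) \<zeta>) = f (g (occ e)) * coord e \<zeta>" .
  qed
qed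

lemma occ_diagonal_app_eq:
  assumes A: "occ_diagonal n A g" and B: "occ_diagonal n B g" and z: "sym_tensor N n \<zeta>"
  shows "app N n A \<zeta> = app N n B \<zeta>"
proof (rule coord_ext[of n])
  show "supported n (app N n A \<zeta>)" "supported n (app N n B \<zeta>)"
    using occ_diagonalD(1)[OF A z] occ_diagonalD(1)[OF B z] by (simp_all add: sym_tensor_supported)
  fix e assume "e \<in> idx N n"
  then show "coord e (app N n A \<zeta>) = coord e (app N n B \<zeta>)"
    using occ_diagonalD(2)[OF A z] occ_diagonalD(2)[OF B z] by simp
qed

lemma T_op_proj_pow_eq_fcalc:
  assumes "\<psi> \<in> Hsym N (j + l)"
  shows "app N (j + l) (T_op N j l (proj_pow u)) \<psi>
       = (\<lambda>a. (1 / of_nat (fact j)) * app N (j + l) (fcalc N (j + l) (nat_ext (f_ell j l)) (number_op N (j + l) u)) \<psi> a)"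
proof -
  have "occ_diagonal (j + l) (\<lambda>a b. (1 / of_nat (fact j)) * fcalc N (j + l) (nat_ext (f_ell j l)) (number_op N (j + l) u) a b)
      (\<lambda>m. (1 / of_nat (fact j)) * nat_ext (f_ell j l) (of_nat m))"
    by (intro occ_diagonal_scale occ_diagonal_fcalc occ_diagonal_number_op)
  then have fc: "occ_diagonal (j + l) (\<lambda>a b. (1 / of_nat (fact j)) * fcalc N (j + l) (nat_ext (f_ell j l)) (number_op N (j + l) u) a b)
      (\<lambda>m. of_real (f_ell j l m) / of_nat (fact j))"
    by (simp add: nat_ext_of_nat)
  have "sym_tensor N (j + l) \<psi>" using assms by (simp add: Hsym_iff_sym_tensor)
  from occ_diagonal_app_eq[OF occ_diagonal_T_op fc this] show ?thesis by (simp only: app_scale)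
qed

section \<open>Spectrum and eigenspaces of \<open>T\<close>\<close>

lemma specH_T_op_proj_pow: assumes M: "1 \<le> M" and N2: "2 \<le> N"
  shows "specH N (M + k) (T_op N M k (proj_pow u)) - {0}
       = (\<lambda>m. of_real (fact k * fact m / (fact M * fact (m - M)))) ` {M..M + k}"
proof -
  define g where "g m = (of_real (f_ell M k m) / of_nat (fact M) :: complex)" for m
  have "specH N (M + k) (T_op N M k (proj_pow u)) = g ` {..M + k}"
    unfolding specH_occ_diagonal[OF occ_diagonal_T_op] occ_image[OF N2, symmetric] image_image g_def ..
  also have "g ` {..M + k} - {0} = g ` {M..M + k}"
  proof (intro equalityI subsetI)
    fix c assume "c \<in> g ` {..M + k} - {0}"
    then obtain m where "m \<le> M + k" "c = g m" "g m \<noteq> 0" by auto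
    moreover then have "M \<le> m" by (auto simp: g_def f_ell_def split: if_splits)
    ultimately show "c \<in> g ` {M..M + k}" by auto
  next
    fix c assume "c \<in> g ` {M..M + k}"
    then obtain m where "M \<le> m" "m \<le> M + k" "c = g m" by auto
    moreover from this have "g m \<noteq> 0" using f_ell_pos[of M m k] by (simp add: g_def)
    ultimately show "c \<in> g ` {..M + k} - {0}" by auto
  qed
  also have "g ` {M..M + k} = (\<lambda>m. of_real (fact k * fact m / (fact M * fact (m - M)))) ` {M..M + k}"
  proof (rule image_cong[OF refl])
    fix m assume "m \<in> {M..M + k}"
    then show "g m = of_real (fact k * fact m / (fact M * fact (m - M)))"
      unfolding g_def by (intro f_ell_div_fact) simp
  qed
  finally show ?thesis .
qed

lemma occ_eq_if_coord_eigenspace_T_op: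
  assumes M: "1 \<le> M" "M \<le> m"
    and \<psi>: "\<psi> \<in> eigenspace N (M + k) (T_op N M k (proj_pow u)) (of_real (f_ell M k m) / of_nat (fact M))"
    and e: "e \<in> idx N (M + k)" and nz: "coord e \<psi> \<noteq> 0"
  shows "occ e = m"
proof -
  have z: "sym_tensor N (M + k) \<psi>" using \<psi> by (simp add: eigenspace_def Hsym_iff_sym_tensor)
  have "app N (M + k) (T_op N M k (proj_pow u)) \<psi> = (\<lambda>a. of_real (f_ell M k m) / of_nat (fact M) * \<psi> a)"
    using \<psi> by (simp add: eigenspace_def tensor_scale_def)
  from occ_diagonal_eigenvalue[OF occ_diagonal_T_op z this e nz]
  have "f_ell M k (occ e) = f_ell M k m" by simp
  then show ?thesis by (rule f_ell_inj[OF M])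
qed

lemma sbasis_in_eigenspace_T_op:
  assumes d: "d \<in> idx N (M + k)"
  shows "sbasis d \<in> eigenspace N (M + k) (T_op N M k (proj_pow u)) (of_real (f_ell M k (occ d)) / of_nat (fact M))"
  using occ_diagonal_sbasis[OF occ_diagonal_T_op d] sym_tensor_sbasis[OF d]
  by (simp add: eigenspace_def Hsym_iff_sym_tensor tensor_scale_def)

lemma independent_sbasis:
  assumes D: "D \<subseteq> idx N n" and inj: "inj_on mset D"
  shows "tensor_space.independent (sbasis ` D)" and "inj_on sbasis D"
proof -
  have finD: "finite D" by (rule finite_subset[OF D finite_idx])
  have diag: "coord d (sbasis d) \<noteq> 0" if "d \<in> D" for d by (rule coord_sbasis_self[OF subsetD[OF D that]])
  have off_diag: "coord d' (sbasis d) = 0" if "d \<in> D" "d' \<in> D" "d \<noteq> d'" for d d'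
  proof (rule ccontr)
    assume "coord d' (sbasis d) \<noteq> 0"
    then have "mset d' = mset d"
      by (rule mset_eq_if_coord_sbasis_nonzero[OF subsetD[OF D that(1)] subsetD[OF D that(2)]])
    then show False using inj_onD[OF inj _ that(2,1)] that(3) by simp
  qed
  show inj_sbasis: "inj_on sbasis D"
  proof (rule inj_onI, rule ccontr)
    fix d d' assume d: "d \<in> D" "d' \<in> D" "sbasis d = sbasis d'" "d \<noteq> d'"
    then have "coord d (sbasis d) = 0" using off_diag[of d' d] by simp
    then show False using diag d(1) by blast
  qed
  show "tensor_space.independent (sbasis ` D)"
  proof
    assume "tensor_space.dependent (sbasis ` D)"
    then obtain c v where v: "v \<in> sbasis ` D" "c v \<noteq> 0" and s0: "(\<Sum>w\<in>sbasis ` D. tensor_scale (c w) w) = 0"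
      unfolding tensor_space.dependent_finite[OF finite_imageI[OF finD]] by blast
    obtain d where d: "d \<in> D" "v = sbasis d" using v(1) by blast
    have "0 = coord d (\<Sum>w\<in>sbasis ` D. tensor_scale (c w) w)" unfolding s0 by (simp add: coord_def)
    also have "\<dots> = (\<Sum>w\<in>sbasis ` D. c w * coord d w)" by (rule coord_sum_scale) (simp add: finD)
    also have "\<dots> = (\<Sum>d'\<in>D. c (sbasis d') * coord d (sbasis d'))" by (simp add: sum.reindex[OF inj_sbasis])
    also have "\<dots> = c (sbasis d) * coord d (sbasis d)"
    proof -
      have "(\<Sum>d'\<in>D - {d}. c (sbasis d') * coord d (sbasis d')) = 0"
      proof (intro sum.neutral ballI)
        fix d' assume "d' \<in> D - {d}"
        then show "c (sbasis d') * coord d (sbasis d') = 0" using off_diag[of d' d] d(1) by simp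
      qed
      then show ?thesis using sum.remove[OF finD d(1), of "\<lambda>d'. c (sbasis d') * coord d (sbasis d')"] by simp
    qed
    finally show False using v(2) d diag by simp
  qed
qed

definition canon_index :: "nat \<Rightarrow> nat multiset \<Rightarrow> nat list" where
  "canon_index m X = replicate m p @ sorted_list_of_multiset X"

lemma mset_canon_index: "mset (canon_index m X) = replicate_mset m p + X"
  by (simp add: canon_index_def)

lemma canon_index_idx:
  assumes X: "X \<in> multisets_of_size ({..<N} - {p}) (n - m)" and m: "m \<le> n"
  shows "canon_index m X \<in> idx N n"
proof -
  have "length (sorted_list_of_multiset X) = size X" by (metis mset_sorted_list_of_multiset size_mset)
  then have "length (canon_index m X) = n" using X m by (simp add: canon_index_def multisets_of_size_def)
  moreover have "set (canon_index m X) \<subseteq> {..<N}" using X pN by (auto simp: canon_index_def multisets_of_size_def)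
  ultimately show ?thesis by (simp add: idx_def)
qed

lemma mset_eq_canon_index:
  assumes c: "c \<in> idx N n"
  defines "X \<equiv> filter_mset (\<lambda>x. x \<noteq> p) (mset c)"
  shows "X \<in> multisets_of_size ({..<N} - {p}) (n - occ c)" and "mset c = mset (canon_index (occ c) X)"
proof -
  have split: "mset c = replicate_mset (occ c) p + X"
    using multiset_partition[of "mset c" "\<lambda>x. x = p"] by (simp add: X_def filter_eq_replicate_mset occ_eq_count)
  then show "mset c = mset (canon_index (occ c) X)" by (simp add: mset_canon_index)
  have "size X = n - occ c" using arg_cong[OF split, of size] length_idx[OF c] by simp
  moreover have "set_mset X \<subseteq> {..<N} - {p}" using c by (auto simp: X_def idx_def)
  ultimately show "X \<in> multisets_of_size ({..<N} - {p}) (n - occ c)" by (simp add: multisets_of_size_def)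
qed

lemma occ_canon_index: "p \<notin># X \<Longrightarrow> occ (canon_index m X) = m"
  by (simp add: occ_eq_count mset_canon_index not_in_iff)

lemma eigenspace_T_op_subset_span:
  assumes M: "1 \<le> M" "M \<le> m" and mk: "m \<le> M + k"
  shows "eigenspace N (M + k) (T_op N M k (proj_pow u)) (of_real (f_ell M k m) / of_nat (fact M))
    \<subseteq> tensor_space.span (sbasis ` canon_index m ` multisets_of_size ({..<N} - {p}) (M + k - m))"
    (is "?E \<subseteq> tensor_space.span ?B")
proof
  fix \<psi> assume \<psi>: "\<psi> \<in> ?E"
  have z: "sym_tensor N (M + k) \<psi>" using \<psi> by (simp add: eigenspace_def Hsym_iff_sym_tensor)
  have "tensor_scale (coord c \<psi>) (sbasis c) \<in> tensor_space.span ?B" if c: "c \<in> idx N (M + k)" for c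
  proof (cases "coord c \<psi> = 0")
    case True
    then have t0: "tensor_scale (coord c \<psi>) (sbasis c) = 0" by (simp add: tensor_scale_def fun_eq_iff)
    show ?thesis unfolding t0 by (rule tensor_space.span_zero)
  next
    case False
    then have occ_c: "occ c = m" using occ_eq_if_coord_eigenspace_T_op[OF M \<psi> c] by simp
    define X where "X = filter_mset (\<lambda>x. x \<noteq> p) (mset c)"
    have X: "X \<in> multisets_of_size ({..<N} - {p}) (M + k - m)" "mset c = mset (canon_index m X)"
      using mset_eq_canon_index[OF c] occ_c by (simp_all add: X_def)
    have "sbasis c = sbasis (canon_index m X)"
      using X canon_index_idx[OF X(1) mk] by (intro sbasis_mset_eq[OF c]) simp_all
    then have "sbasis c \<in> ?B" using X(1) by blast
    then show ?thesis by (intro tensor_space.span_scale tensor_space.span_base)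
  qed
  then show "\<psi> \<in> tensor_space.span ?B"
    by (subst sym_tensor_eq_sum_sbasis[OF z]) (rule tensor_space.span_sum)
qed

lemma dim_eigenspace_T_op_proj_pow:
  assumes M: "1 \<le> M" and N2: "2 \<le> N" and m: "M \<le> m" "m \<le> M + k"
  shows "tensor_space.dim (eigenspace N (M + k) (T_op N M k (proj_pow u)) (of_real (f_ell M k m) / of_nat (fact M)))
       = (M + k - m + N - 2) choose (N - 2)"
proof -
  define n where "n = M + k"
  define E where "E = eigenspace N n (T_op N M k (proj_pow u)) (of_real (f_ell M k m) / of_nat (fact M))"
  define R where "R = multisets_of_size ({..<N} - {p}) (n - m)"
  define D where "D = canon_index m ` R"
  have D: "D \<subseteq> idx N n" using canon_index_idx m by (auto simp: D_def R_def n_def)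
  have inj_R: "inj_on (canon_index m) R" by (rule inj_onI) (metis mset_canon_index add_left_cancel)
  have inj_D: "inj_on mset D" by (auto simp: D_def inj_on_def mset_canon_index)
  have "sbasis ` D \<subseteq> E"
  proof
    fix w assume "w \<in> sbasis ` D"
    then obtain X where X: "X \<in> R" and w: "w = sbasis (canon_index m X)" by (auto simp: D_def)
    have "occ (canon_index m X) = m" using X by (intro occ_canon_index) (auto simp: R_def multisets_of_size_def)
    then show "w \<in> E" using sbasis_in_eigenspace_T_op[of "canon_index m X"] D X w
      by (auto simp: E_def n_def D_def)
  qed
  moreover have "E \<subseteq> tensor_space.span (sbasis ` D)"
    using eigenspace_T_op_subset_span[OF M m] by (simp add: E_def D_def R_def n_def)
  ultimately have "tensor_space.span (sbasis ` D) = tensor_space.span E"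
    unfolding tensor_space.span_eq using tensor_space.span_superset by blast
  then have "tensor_space.dim E = card (sbasis ` D)"
    using independent_sbasis(1)[OF D inj_D] by (rule tensor_space.dim_eq_card)
  also have "\<dots> = card R"
    unfolding D_def card_image[OF independent_sbasis(2)[OF D inj_D, unfolded D_def]] by (rule card_image[OF inj_R])
  also have "\<dots> = (N - 1 + (n - m) - 1) choose (n - m)"
    using card_multisets_of_size[of "{..<N} - {p}" "n - m"] pN by (simp add: R_def)
  also have "\<dots> = (n - m + N - 2) choose (N - 2)"
  proof -
    have "N - 1 + (n - m) - 1 = n - m + N - 2" using N2 by simp
    moreover have "(n - m + N - 2) choose (n - m) = (n - m + N - 2) choose (N - 2)"
      using binomial_symmetric[of "n - m" "n - m + N - 2"] N2 by simp
    ultimately show ?thesis by simp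
  qed
  finally show ?thesis by (simp add: E_def n_def)
qed

end

lemma unit_vec_nonzero_entry: assumes "unit_vec N u" shows "\<exists>p<N. u p \<noteq> 0"
proof (rule ccontr)
  assume "\<not> (\<exists>p<N. u p \<noteq> 0)"
  then have "(\<Sum>i<N. (cmod (u i))\<^sup>2) = 0" by simp
  then show False using assms by (simp add: unit_vec_def)
qed

theorem mainTheorem8:
  fixes N j l M k :: nat and u v :: "nat \<Rightarrow> complex"
  assumes "N \<ge> 2" and "unit_vec N u"
    and "M \<ge> 1" and "unit_vec N v"
  shows "(\<forall>\<psi>\<in>Hsym N (j + l).
            app N (j + l) (T_op N j l (proj_pow u)) \<psi>
          = (\<lambda>a. (1 / of_nat (fact j)) *
               app N (j + l) (fcalc N (j + l) (nat_ext (f_ell j l)) (number_op N (j + l) u)) \<psi> a))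
   \<and> mono (f_ell j l)
   \<and> specH N (M + k) (T_op N M k (proj_pow v)) - {0}
       = (\<lambda>m. of_real (fact k * fact m / (fact M * fact (m - M)))) ` {M..M + k}
   \<and> (\<forall>m\<in>{M..M + k}.
        vector_space.dim tensor_scale
          {\<psi>\<in>Hsym N (M + k). app N (M + k) (T_op N M k (proj_pow v)) \<psi>
              = tensor_scale (of_real (fact k * fact m / (fact M * fact (m - M)))) \<psi>}
        = (M + k - m + N - 2) choose (N - 2))"
proof -
  obtain p where "p < N" "u p \<noteq> 0" using unit_vec_nonzero_entry[OF assms(2)] by blast
  then interpret U: adapted_basis N u p using assms(2) by unfold_locales
  obtain q where "q < N" "v q \<noteq> 0" using unit_vec_nonzero_entry[OF assms(4)] by blast
  then interpret V: adapted_basis N v q using assms(4) by unfold_locales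
  have "tensor_space.dim {\<psi>\<in>Hsym N (M + k). app N (M + k) (T_op N M k (proj_pow v)) \<psi>
              = tensor_scale (of_real (fact k * fact m / (fact M * fact (m - M)))) \<psi>}
        = (M + k - m + N - 2) choose (N - 2)" if m: "m \<in> {M..M + k}" for m
  proof -
    have "of_real (fact k * fact m / (fact M * fact (m - M))) = (of_real (f_ell M k m) / of_nat (fact M) :: complex)"
      using m by (intro f_ell_div_fact[symmetric]) simp
    then show ?thesis
      using V.dim_eigenspace_T_op_proj_pow[OF assms(3,1), of m] m by (simp only: eigenspace_def) simp
  qed
  then show ?thesis
    using U.T_op_proj_pow_eq_fcalc mono_f_ell V.specH_T_op_proj_pow[OF assms(3,1)] by blast
qed

end
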